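(* Assume $p>k-1$. Then for all integers $n\ge 0$, $0\le i\le p-2$ and $0\le j\le k-2$, \[ \Big\| \sum_{t=0}^{j} (-1)^{j-t}\binom{j}{t}\, Q_{n,t}(f,\omega^i)\big(u^{-t}(1+X)-1\big)\Big\| \le p^{-(n+1)j}. \]
   Context: Let $p$ be an odd prime and fix an embedding $\overline{\mathbb{Q}}\hookrightarrow\mathbb{C}_p$. Let $f=\sum_{n\ge1}a_nq^n\in S_k(\Gamma_1(N_f),\epsilon_f)$ be a normalized cuspidal Hecke eigenform of weight $k\ge2$ with $p\nmid N_f$ and $\mathrm{ord}_p(a_p)>0$. Let $E/\mathbb{Q}_p$ be a finite extension containing all $a_n$ and all values of $\epsilon_f$, with ring of integers $\mathcal{O}$. Let $|\cdot|_p$ be normalized by $|p|_p=p^{-1}$; for a polynomial or power series $P=\sum c_iX^i$ with coefficients in a finite extension of $\mathbb{Q}_p$, put $\|P\|=\sup_i|c_i|_p$. Galois groups: $\Delta=\mathrm{Gal}(\mathbb{Q}(\mu_p)/\mathbb{Q})$, $\omega$ the Teichmüller character of $\Delta$; $G_\infty=\mathrm{Gal}(\mathbb{Q}(\mu_{p^\infty})/\mathbb{Q}(\mu_p))\cong\mathbb{Z}_p$ with a fixed topological generator $\gamma$, and $u=\chi_{\mathrm{cyc}}(\gamma)\in1+p\mathbb{Z}_p$; $G_n=\mathrm{Gal}(\mathbb{Q}(\mu_{p^{n+1}})/\mathbb{Q}(\mu_p))$, cyclic of order $p^n$, so $\mathrm{Gal}(\mathbb{Q}(\mu_{p^{n+1}})/\mathbb{Q})\cong\Delta\times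 G_n$. For $a\in(\mathbb{Z}/p^{n+1}\mathbb{Z})^\times$ let $\sigma_a$ be $\zeta\mapsto\zeta^a$, $\bar\sigma_a$ its image in $G_n$, and $m(a)\in\{0,\dots,p^n-1\}$ the integer with $\bar\sigma_a=\gamma^{m(a)}$. Periods: for $r\in\mathbb{Q}$ and a sign $\pm$, put $\xi_f^\pm(r)=\pi\sqrt{-1}\big(\int_r^{i\infty}f(z)(zX+Y)^{k-2}dz\pm(-1)^k\int_{-r}^{i\infty}f(z)(-zX+Y)^{k-2}dz\big)\in\mathbb{C}[X,Y]$. The numbers $\Omega_f^\pm\in\mathbb{C}^\times$ are cohomological periods of $f$: $\xi_f^\pm(r)/\Omega_f^\pm\in\mathcal{O}[X,Y]$ for all $r\in\mathbb{Q}$ (normalized, up to $\mathcal{O}^\times$, so that the resulting $\mathcal{O}$-valued modular symbol is primitive). Theta elements: for $n\ge0$, $0\le i\le p-2$, $0\le j\le k-2$, \[\theta_{n,j}(f,\omega^i)=\frac{\pi\sqrt{-1}}{\Omega_f^{(-1)^i}}\sum_{a\in(\mathbb{Z}/p^{n+1}\mathbb{Z})^\times}\Big(\int_{-a/p^{n+1}}^{i\infty}f(z)(p^{n+1}z+a)^jdz+(-1)^{i+k+j}\int_{a/p^{n+1}}^{i\infty}f(z)(p^{n+1}z-a)^jdz\Big)\omega^{i-j}(a)\bar\sigma_a\in\mathcal{O}[G_n],\] and $Q_{n,j}(f,\omega^i)\in\mathcal{O}[X]$ is the polynomial obtained by replacing each $\bar\sigma_a$ by $(1+X)^{m(a)}$.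 *)

theory Defs
  imports "HOL-Analysis.Analysis" "HOL-Computational_Algebra.Polynomial"
begin

definition nonarch_abs :: "('K::field \<Rightarrow> real) \<Rightarrow> bool" where
  "nonarch_abs absv \<longleftrightarrow>
     (\<forall>x. 0 \<le> absv x) \<and> (\<forall>x. absv x = 0 \<longleftrightarrow> x = 0) \<and>
     (\<forall>x y. absv (x * y) = absv x * absv y) \<and>
     (\<forall>x y. absv (x + y) \<le> max (absv x) (absv y))"

text \<open>(K, absv) is (a copy of) C_p and iota is an embedding of the field of algebraic
  complex numbers into it: absv is non-archimedean with |p| = 1/p, K is complete and
  algebraically closed, and iota(Qbar) is dense in K.\<close>
definition Cp_setup :: "('K::field_char_0 \<Rightarrow> real) \<Rightarrow> nat \<Rightarrow> (complex \<Rightarrow> 'K) \<Rightarrow> bool" where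
  "Cp_setup absv p \<iota> \<longleftrightarrow>
     nonarch_abs absv \<and> absv (of_nat p) = 1 / real p \<and>
     (\<forall>X::nat \<Rightarrow> 'K. (\<forall>e>0. \<exists>M. \<forall>m\<ge>M. \<forall>n\<ge>M. absv (X m - X n) < e) \<longrightarrow>
        (\<exists>L. \<forall>e>0. \<exists>M. \<forall>n\<ge>M. absv (X n - L) < e)) \<and>
     (\<forall>P::'K poly. 0 < degree P \<longrightarrow> (\<exists>x. poly P x = 0)) \<and>
     \<iota> 1 = 1 \<and>
     (\<forall>x y. algebraic x \<longrightarrow> algebraic y \<longrightarrow> \<iota> (x + y) = \<iota> x + \<iota> y \<and> \<iota> (x * y) = \<iota> x * \<iota> y) \<and>
     (\<forall>x. \<forall>e>0. \<exists>c. algebraic c \<and> absv (x - \<iota> c) < e)"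

definition in_Qp :: "('K::field_char_0 \<Rightarrow> real) \<Rightarrow> 'K \<Rightarrow> bool" where
  "in_Qp absv x \<longleftrightarrow> (\<forall>e>0. \<exists>q::rat. absv (x - of_rat q) < e)"

definition in_Zp :: "('K::field_char_0 \<Rightarrow> real) \<Rightarrow> 'K \<Rightarrow> bool" where
  "in_Zp absv x \<longleftrightarrow> (\<forall>e>0. \<exists>z::int. absv (x - of_int z) < e)"

definition finite_ext_Qp :: "('K::field_char_0 \<Rightarrow> real) \<Rightarrow> 'K set \<Rightarrow> bool" where
  "finite_ext_Qp absv E \<longleftrightarrow>
     {x. in_Qp absv x} \<subseteq> E \<and>
     (\<forall>x\<in>E. \<forall>y\<in>E. x + y \<in> E \<and> x - y \<in> E \<and> x * y \<in> E \<and> inverse x \<in> E) \<and>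
     (\<exists>bs::'K list. set bs \<subseteq> E \<and>
        (\<forall>x\<in>E. \<exists>cs::'K list. length cs = length bs \<and> (\<forall>c\<in>set cs. in_Qp absv c) \<and>
            x = (\<Sum>l<length bs. cs ! l * bs ! l)))"

definition teich :: "('K::field_char_0 \<Rightarrow> real) \<Rightarrow> nat \<Rightarrow> int \<Rightarrow> 'K" where
  "teich absv p a = (THE \<zeta>. \<zeta> ^ (p - 1) = 1 \<and> absv (\<zeta> - of_int a) < 1)"

text \<open>m(a): the exponent with bar sigma_a = gamma^m(a) in G_n, i.e. the unique
  m in {0..p^n-1} with u^m congruent to <a> = a * omega(a)^(-1) modulo p^(n+1).\<close>
definition mexp :: "('K::field_char_0 \<Rightarrow> real) \<Rightarrow> nat \<Rightarrow> 'K \<Rightarrow> nat \<Rightarrow> int \<Rightarrow> nat" where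
  "mexp absv p u n a = (THE m. m < p ^ n \<and>
      absv (u ^ m - of_int a * inverse (teich absv p a)) \<le> 1 / real p ^ (n + 1))"

definition pnorm :: "('K::field_char_0 \<Rightarrow> real) \<Rightarrow> 'K poly \<Rightarrow> real" where
  "pnorm absv P = Max ((\<lambda>l. absv (coeff P l)) ` {..degree P})"

definition upper_half :: "complex set" where
  "upper_half = {z. 0 < Im z}"

definition moeb :: "int \<Rightarrow> int \<Rightarrow> int \<Rightarrow> int \<Rightarrow> complex \<Rightarrow> complex" where
  "moeb a b c d z = (of_int a * z + of_int b) / (of_int c * z + of_int d)"

definition dirichlet_char :: "nat \<Rightarrow> (int \<Rightarrow> complex) \<Rightarrow> bool" where
  "dirichlet_char N \<epsilon> \<longleftrightarrow>
     (\<forall>m. \<epsilon> (m + int N) = \<epsilon> m) \<and> \<epsilon> 1 = 1 \<and>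
     (\<forall>m n. \<epsilon> (m * n) = \<epsilon> m * \<epsilon> n) \<and> (\<forall>m. \<epsilon> m = 0 \<longleftrightarrow> \<not> coprime m (int N))"

text \<open>Cusp forms in S_k(Gamma_1(N), eps): holomorphic on the upper half plane,
  transforming with character eps under Gamma_0(N), and vanishing at every cusp
  (f|_k gamma tends to 0 uniformly as Im z tends to infinity, for all gamma in SL_2(Z)).\<close>
definition cusp_form :: "nat \<Rightarrow> nat \<Rightarrow> (int \<Rightarrow> complex) \<Rightarrow> (complex \<Rightarrow> complex) \<Rightarrow> bool" where
  "cusp_form k N \<epsilon> f \<longleftrightarrow>
     f holomorphic_on upper_half \<and>
     (\<forall>a b c d. a * d - b * c = 1 \<and> int N dvd c \<longrightarrow>
        (\<forall>z\<in>upper_half. f (moeb a b c d z) = \<epsilon> d * (of_int c * z + of_int d) ^ k * f z)) \<and>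
     (\<forall>a b c d. a * d - b * c = 1 \<longrightarrow>
        (\<forall>e>0. \<exists>Y. \<forall>z. Y < Im z \<longrightarrow>
            norm (f (moeb a b c d z) / (of_int c * z + of_int d) ^ k) < e))"

definition q_expansion :: "(complex \<Rightarrow> complex) \<Rightarrow> (nat \<Rightarrow> complex) \<Rightarrow> bool" where
  "q_expansion f an \<longleftrightarrow>
     (\<forall>z\<in>upper_half. (\<lambda>n. an n * exp (2 * of_real pi * \<i> * of_nat n * z)) sums f z)"

text \<open>Normalized cuspidal Hecke eigenform with q-coefficients an: eigenvector of all
  Hecke operators T_m (m >= 1, including U_l for l | N), whose action on q-expansions of
  forms in S_k(Gamma_1(N), eps) is a_n(T_m g) = sum_{d | (m,n)} eps(d) d^(k-1) a_(mn/d^2)(g).\<close>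
definition normalized_eigenform ::
  "nat \<Rightarrow> nat \<Rightarrow> (int \<Rightarrow> complex) \<Rightarrow> (complex \<Rightarrow> complex) \<Rightarrow> (nat \<Rightarrow> complex) \<Rightarrow> bool" where
  "normalized_eigenform k N \<epsilon> f an \<longleftrightarrow>
     cusp_form k N \<epsilon> f \<and> q_expansion f an \<and> an 0 = 0 \<and> an 1 = 1 \<and>
     (\<forall>m\<ge>1. \<exists>ev. \<forall>n\<ge>1.
        (\<Sum>d\<in>{d. d dvd gcd m n}. \<epsilon> (int d) * of_nat d ^ (k - 1) * an (m * n div d ^ 2)) = ev * an n)"

definition int_to_icusp :: "(complex \<Rightarrow> complex) \<Rightarrow> real \<Rightarrow> complex" where
  "int_to_icusp g r = \<i> * integral {0..} (\<lambda>t::real. g (of_real r + \<i> * of_real t))"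

text \<open>Coefficient of X^s Y^(k-2-s) in xi_f^{sg}(r) (sg = True for +, False for -).\<close>
definition xi_coeff :: "(complex \<Rightarrow> complex) \<Rightarrow> nat \<Rightarrow> bool \<Rightarrow> real \<Rightarrow> nat \<Rightarrow> complex" where
  "xi_coeff f k sg r s = of_real pi * \<i> * of_nat ((k - 2) choose s) *
     (int_to_icusp (\<lambda>z. f z * z ^ s) r +
      (if sg then 1 else -1) * (-1) ^ k * int_to_icusp (\<lambda>z. f z * (- z) ^ s) (- r))"

text \<open>Omega is a cohomological period for sign sg: all xi_f^sg(r)/Omega (r rational)
  have coefficients in O (the ring of integers of E), and the resulting O-valued
  modular symbol is primitive (some coefficient is a unit).\<close>
definition cohom_period ::
  "('K::field_char_0 \<Rightarrow> real) \<Rightarrow> (complex \<Rightarrow> 'K) \<Rightarrow> 'K set \<Rightarrow> (complex \<Rightarrow> complex) \<Rightarrow> nat \<Rightarrow> bool \<Rightarrow> complex \<Rightarrow> bool" where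
  "cohom_period absv \<iota> E f k sg \<Omega> \<longleftrightarrow> \<Omega> \<noteq> 0 \<and>
     (\<forall>r::rat. \<forall>s\<le>k - 2. algebraic (xi_coeff f k sg (of_rat r) s / \<Omega>) \<and>
        \<iota> (xi_coeff f k sg (of_rat r) s / \<Omega>) \<in> E \<and> absv (\<iota> (xi_coeff f k sg (of_rat r) s / \<Omega>)) \<le> 1) \<and>
     (\<exists>r::rat. \<exists>s\<le>k - 2. absv (\<iota> (xi_coeff f k sg (of_rat r) s / \<Omega>)) = 1)"

text \<open>The complex coefficient of bar sigma_a in theta_{n,j}(f, omega^i), before multiplying
  by omega^{i-j}(a); a runs through representatives 1..p^(n+1) prime to p.\<close>
definition theta_coeff ::
  "(complex \<Rightarrow> complex) \<Rightarrow> nat \<Rightarrow> complex \<Rightarrow> nat \<Rightarrow> nat \<Rightarrow> nat \<Rightarrow> nat \<Rightarrow> int \<Rightarrow> complex" where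
  "theta_coeff f k \<Omega> p n i j a = of_real pi * \<i> / \<Omega> *
     (int_to_icusp (\<lambda>z. f z * (of_nat (p ^ (n + 1)) * z + of_int a) ^ j) (- of_int a / real (p ^ (n + 1))) +
      (-1) ^ (i + k + j) *
      int_to_icusp (\<lambda>z. f z * (of_nat (p ^ (n + 1)) * z - of_int a) ^ j) (of_int a / real (p ^ (n + 1))))"

definition units_mod :: "nat \<Rightarrow> nat \<Rightarrow> int set" where
  "units_mod p n = {a. 1 \<le> a \<and> a \<le> int (p ^ (n + 1)) \<and> coprime a (int p)}"

definition Qpoly ::
  "('K::field_char_0 \<Rightarrow> real) \<Rightarrow> (complex \<Rightarrow> 'K) \<Rightarrow> (complex \<Rightarrow> complex) \<Rightarrow> nat \<Rightarrow> complex \<Rightarrow> complex \<Rightarrow>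
   nat \<Rightarrow> 'K \<Rightarrow> nat \<Rightarrow> nat \<Rightarrow> nat \<Rightarrow> 'K poly" where
  "Qpoly absv \<iota> f k Omp Omm p u n i j =
     (\<Sum>a\<in>units_mod p n.
        smult (\<iota> (theta_coeff f k (if even i then Omp else Omm) p n i j a) *
               teich absv p a ^ nat ((int i - int j) mod (int p - 1)))
              ([:1, 1:] ^ mexp absv p u n a))"

end

theory Submission
  imports Defs "HOL-Number_Theory.Number_Theory" "HOL-Complex_Analysis.Complex_Analysis"
begin

text \<open>
  Write \<open>\<langle>a\<rangle> = a \<omega>(a)\<^sup>-\<^sup>1 \<equiv> u\<^sup>m\<^sup>(\<^sup>a\<^sup>) (mod p\<^sup>n\<^sup>+\<^sup>1)\<close>. Substituting \<open>u\<^sup>-\<^sup>t (1 + X) - 1\<close> for \<open>X\<close>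
  multiplies the coefficient of \<open>(1 + X)\<^sup>m\<^sup>(\<^sup>a\<^sup>)\<close> in \<open>Q\<^sub>n\<^sub>,\<^sub>t\<close> by \<open>u\<^sup>-\<^sup>t\<^sup>m\<^sup>(\<^sup>a\<^sup>)\<close>, so the coefficient of
  \<open>(1 + X)\<^sup>m\<^sup>(\<^sup>a\<^sup>)\<close> in the alternating sum is
  \<open>\<Sum>\<^sub>t (-1)\<^sup>j\<^sup>-\<^sup>t (j choose t) \<theta>\<^sub>t(a) \<omega>(a)\<^sup>i\<^sup>-\<^sup>t u\<^sup>-\<^sup>t\<^sup>m\<^sup>(\<^sup>a\<^sup>)\<close>.
  Expanding \<open>(p\<^sup>n\<^sup>+\<^sup>1 z \<plusminus> a)\<^sup>t\<close> binomially gives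
  \<open>\<theta>\<^sub>t(a) = \<Sum>\<^sub>s (t choose s) p\<^sup>(\<^sup>n\<^sup>+\<^sup>1\<^sup>)\<^sup>s a\<^sup>t\<^sup>-\<^sup>s \<eta>\<^sub>s\<close>, where \<open>\<eta>\<^sub>s\<close> is an integral period divided by
  \<open>(k - 2 choose s)\<close>, a \<open>p\<close>-adic unit because \<open>p > k - 1\<close>.
  The identity \<open>\<Sum>\<^sub>t (-1)\<^sup>j\<^sup>-\<^sup>t (j choose t) (t choose s) y\<^sup>t\<^sup>-\<^sup>s = (j choose s) (y - 1)\<^sup>j\<^sup>-\<^sup>s\<close> turns the
  coefficient into \<open>\<omega>(a)\<^sup>i \<Sum>\<^sub>s (j choose s) \<eta>\<^sub>s (p\<^sup>n\<^sup>+\<^sup>1 w)\<^sup>s (a w - 1)\<^sup>j\<^sup>-\<^sup>s\<close> with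
  \<open>w = \<omega>(a)\<^sup>-\<^sup>1 u\<^sup>-\<^sup>m\<^sup>(\<^sup>a\<^sup>)\<close>, and both \<open>p\<^sup>n\<^sup>+\<^sup>1 w\<close> and \<open>a w - 1\<close> have absolute value at most
  \<open>p\<^sup>-\<^sup>(\<^sup>n\<^sup>+\<^sup>1\<^sup>)\<close>, so every term is bounded by \<open>p\<^sup>-\<^sup>(\<^sup>n\<^sup>+\<^sup>1\<^sup>)\<^sup>j\<close>.

  The analytic input is that the period integrals converge along vertical lines, which follows
  from the exponential decay of a cusp form at every cusp.
\<close>

hide_const (open) UnivPoly.monom UnivPoly.coeff Module.module.smult

section \<open>Algebraic numbers and their embedding into \<open>\<complex>\<^sub>p\<close>\<close>

interpretation rat_span: vector_space "\<lambda>(q::rat) (z::complex). of_rat q * z"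
  by unfold_locales (auto simp: of_rat_add of_rat_mult algebra_simps)

lemma algebraic_if_powers_in_finite_span:
  fixes z :: complex
  assumes fin: "finite S" and span: "\<And>m. z ^ m \<in> rat_span.span S"
  shows "algebraic z"
proof (cases "inj_on (\<lambda>m. z ^ m) {..card S}")
  case False
  then obtain m1 m2 where m: "m1 \<noteq> m2" "z ^ m1 = z ^ m2"
    unfolding inj_on_def by auto
  define P :: "complex poly" where "P = monom 1 m1 - monom 1 m2"
  have "coeff P m1 \<noteq> 0" using m by (simp add: P_def)
  moreover have "poly P z = 0" using m by (simp add: P_def poly_monom)
  moreover have "coeff P i \<in> \<int>" for i by (simp add: P_def)
  ultimately show ?thesis by (intro algebraicI[of P]) auto
next
  case True
  define A where "A = (\<lambda>m. z ^ m) ` {..card S}"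
  have "card A = Suc (card S)" using True by (simp add: A_def card_image)
  moreover have "A \<subseteq> rat_span.span S" using span by (auto simp: A_def)
  ultimately have "rat_span.dependent A"
    by (metis rat_span.independent_span_bound[OF fin] not_less_eq_eq order_refl)
  then obtain T c v0 where T: "finite T" "T \<subseteq> A" "(\<Sum>v\<in>T. of_rat (c v) * v) = 0" "v0 \<in> T" "c v0 \<noteq> 0"
    unfolding rat_span.dependent_explicit by blast
  define exponent where "exponent = inv_into {..card S} (\<lambda>m. z ^ m)"
  have z_exponent: "z ^ exponent v = v" if "v \<in> A" for v
    using that by (auto simp: A_def exponent_def f_inv_into_f)
  have "inj_on exponent T"
    using T(2) unfolding exponent_def A_def by (meson inj_on_inv_into inj_on_subset)
  define P :: "complex poly" where "P = (\<Sum>v\<in>T. monom (of_rat (c v)) (exponent v))"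
  have coeff_P: "coeff P i = (\<Sum>v\<in>T. if exponent v = i then of_rat (c v) else 0)" for i
    by (simp add: P_def coeff_sum)
  have "coeff P i \<in> \<rat>" for i unfolding coeff_P by (intro Rats_sum) auto
  moreover have "coeff P (exponent v0) = of_rat (c v0)"
  proof -
    have "coeff P (exponent v0) = (\<Sum>v\<in>T. if v = v0 then of_rat (c v) else 0)"
      unfolding coeff_P using \<open>inj_on exponent T\<close> T(4) by (intro sum.cong) (auto simp: inj_on_def)
    also have "\<dots> = of_rat (c v0)" using T(1,4) by simp
    finally show ?thesis .
  qed
  moreover have "poly P z = (\<Sum>v\<in>T. of_rat (c v) * v)"
    unfolding P_def poly_sum poly_monom using T(2) z_exponent by (intro sum.cong) auto
  ultimately show ?thesis using T(3,5) by (intro algebraicI'[of P]) auto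
qed

lemma algebraic_power_in_span_of_lower_powers:
  fixes x :: complex
  assumes "algebraic x"
  obtains d where "\<And>m. x ^ m \<in> rat_span.span ((\<lambda>i. x ^ i) ` {..<d})"
proof -
  obtain P where P: "\<And>i. coeff P i \<in> \<rat>" "P \<noteq> 0" "poly P x = 0"
    using assms unfolding algebraic_altdef by blast
  define d where "d = degree P"
  define c where "c i = (SOME q. coeff P i = of_rat q)" for i
  have c: "coeff P i = of_rat (c i)" for i
    unfolding c_def by (rule someI_ex) (use P(1)[of i] in \<open>auto elim: Rats_cases\<close>)
  have lead: "c d \<noteq> 0" using P(2) c[of d] by (auto simp: d_def)
  have "0 = (\<Sum>i<d. of_rat (c i) * x ^ i) + of_rat (c d) * x ^ d"
    using P(3) by (simp add: poly_altdef d_def c lessThan_Suc_atMost[symmetric])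
  hence monic: "x ^ d = (\<Sum>i<d. of_rat (- c i / c d) * x ^ i)"
    using lead by (simp add: of_rat_divide of_rat_minus sum_divide_distrib[symmetric] field_simps
                             eq_neg_iff_add_eq_0 sum_negf)
  have "x ^ m \<in> rat_span.span ((\<lambda>i. x ^ i) ` {..<d})" for m
  proof (induction m rule: less_induct)
    case (less m)
    show ?case
    proof (cases "m < d")
      case True thus ?thesis by (intro rat_span.span_base) auto
    next
      case False
      have "x ^ m = x ^ (m - d) * x ^ d" using False by (simp flip: power_add)
      also have "\<dots> = (\<Sum>i<d. of_rat (- c i / c d) * x ^ (m - d + i))"
        by (subst monic) (simp add: sum_distrib_left power_add algebra_simps)
      also have "\<dots> \<in> rat_span.span ((\<lambda>i. x ^ i) ` {..<d})"
        using False by (intro rat_span.span_sum rat_span.span_scale less) auto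
      finally show ?thesis .
    qed
  qed
  thus thesis by (rule that)
qed

lemma mult_in_span_of_products:
  fixes a b :: complex
  assumes "finite A" "finite B" "a \<in> rat_span.span A" "b \<in> rat_span.span B"
  shows "a * b \<in> rat_span.span ((\<lambda>(v, w). v * w) ` (A \<times> B))"
proof -
  obtain c where c: "a = (\<Sum>v\<in>A. of_rat (c v) * v)"
    using assms(3) rat_span.span_finite[OF assms(1)] by auto
  obtain c' where c': "b = (\<Sum>w\<in>B. of_rat (c' w) * w)"
    using assms(4) rat_span.span_finite[OF assms(2)] by auto
  have "a * b = (\<Sum>v\<in>A. \<Sum>w\<in>B. of_rat (c v * c' w) * (v * w))"
    by (simp add: c c' sum_distrib_left sum_distrib_right of_rat_mult algebra_simps)
  also have "\<dots> \<in> rat_span.span ((\<lambda>(v, w). v * w) ` (A \<times> B))"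
    by (intro rat_span.span_sum rat_span.span_scale rat_span.span_base) auto
  finally show ?thesis .
qed

lemma algebraic_add_mult:
  fixes x y :: complex
  assumes "algebraic x" "algebraic y"
  shows algebraic_add: "algebraic (x + y)" and algebraic_mult: "algebraic (x * y)"
proof -
  obtain d where d: "\<And>m. x ^ m \<in> rat_span.span ((\<lambda>i. x ^ i) ` {..<d})"
    using algebraic_power_in_span_of_lower_powers[OF assms(1)] by blast
  obtain e where e: "\<And>m. y ^ m \<in> rat_span.span ((\<lambda>i. y ^ i) ` {..<e})"
    using algebraic_power_in_span_of_lower_powers[OF assms(2)] by blast
  define S where "S = (\<lambda>(v, w). v * w) ` ((\<lambda>i. x ^ i) ` {..<d} \<times> (\<lambda>i. y ^ i) ` {..<e})"
  have "finite S" by (simp add: S_def)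
  have monomial: "x ^ i * y ^ l \<in> rat_span.span S" for i l
    unfolding S_def by (intro mult_in_span_of_products d e) auto
  show "algebraic (x + y)"
  proof (rule algebraic_if_powers_in_finite_span[OF \<open>finite S\<close>])
    fix m
    have "(x + y) ^ m = (\<Sum>l\<le>m. of_rat (of_nat (m choose l)) * (x ^ l * y ^ (m - l)))"
      by (simp add: binomial_ring algebra_simps)
    also have "\<dots> \<in> rat_span.span S" by (intro rat_span.span_sum rat_span.span_scale monomial)
    finally show "(x + y) ^ m \<in> rat_span.span S" .
  qed
  show "algebraic (x * y)"
    by (rule algebraic_if_powers_in_finite_span[OF \<open>finite S\<close>]) (simp add: power_mult_distrib monomial)
qed

lemma algebraic_sum:
  "(\<And>a. a \<in> A \<Longrightarrow> algebraic (g a :: complex)) \<Longrightarrow> algebraic (sum g A)"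
  by (induction A rule: infinite_finite_induct) (auto intro: algebraic_add)

locale iota_hom =
  fixes \<iota> :: "complex \<Rightarrow> 'K::field_char_0"
  assumes iota_1: "\<iota> 1 = 1"
    and iota_add_mult: "\<forall>x y. algebraic x \<longrightarrow> algebraic y \<longrightarrow> \<iota> (x + y) = \<iota> x + \<iota> y \<and> \<iota> (x * y) = \<iota> x * \<iota> y"
begin

lemma iota_add: "algebraic x \<Longrightarrow> algebraic y \<Longrightarrow> \<iota> (x + y) = \<iota> x + \<iota> y"
  and iota_mult: "algebraic x \<Longrightarrow> algebraic y \<Longrightarrow> \<iota> (x * y) = \<iota> x * \<iota> y"
  using iota_add_mult by blast+

lemma iota_0: "\<iota> 0 = 0"
  using iota_add[of 0 0] by simp

lemma iota_of_nat: "\<iota> (of_nat n) = of_nat n"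
  by (induction n) (simp_all add: iota_0 iota_add[of 1] iota_1 add.commute)

lemma iota_uminus: "algebraic x \<Longrightarrow> \<iota> (- x) = - \<iota> x"
  using iota_add[of x "- x"] iota_0 by (simp add: eq_neg_iff_add_eq_0 add.commute)

lemma iota_of_int: "\<iota> (of_int z) = of_int z"
  by (cases z rule: int_cases) (simp_all add: iota_of_nat iota_uminus del: of_nat_Suc)

lemma iota_inverse_of_nat: "\<iota> (inverse (of_nat n)) = inverse (of_nat n)"
proof (cases "n = 0")
  case False
  have "algebraic (inverse (of_nat n :: complex))" by (intro algebraic_inverse) simp
  hence "\<iota> (of_nat n) * \<iota> (inverse (of_nat n)) = \<iota> (of_nat n * inverse (of_nat n))" by (simp add: iota_mult)
  also have "\<dots> = 1" using False iota_1 by simp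
  finally show ?thesis by (simp add: iota_of_nat inverse_unique)
qed (simp add: iota_0)

lemma iota_sum: "(\<And>a. a \<in> A \<Longrightarrow> algebraic (g a)) \<Longrightarrow> \<iota> (sum g A) = (\<Sum>a\<in>A. \<iota> (g a))"
  by (induction A rule: infinite_finite_induct) (simp_all add: iota_0 iota_add algebraic_sum)

lemma iota_of_int_mult_div:
  assumes "algebraic x"
  shows "\<iota> (of_int z * x / of_nat m) = of_int z * \<iota> x / of_nat m"
proof -
  have "algebraic (of_int z * inverse (of_nat m) :: complex)" by (intro algebraic_mult) auto
  moreover have "\<iota> (of_int z * inverse (of_nat m)) = of_int z * inverse (of_nat m)"
    by (subst iota_mult) (auto simp: iota_of_int iota_inverse_of_nat)
  ultimately have "\<iota> ((of_int z * inverse (of_nat m)) * x) = (of_int z * inverse (of_nat m)) * \<iota> x"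
    using assms by (simp add: iota_mult)
  thus ?thesis by (simp add: divide_inverse ac_simps)
qed

end

lemma Cp_setup_imp_iota_hom:
  assumes "Cp_setup absv p \<iota>"
  shows "iota_hom \<iota>"
  using assms by unfold_locales (simp_all add: Cp_setup_def)

section \<open>Non-archimedean absolute values, Teichmueller representatives and the exponents \<open>m(a)\<close>\<close>

locale nonarch_field =
  fixes absv :: "'K::field \<Rightarrow> real"
  assumes nonarch: "nonarch_abs absv"
begin

lemma absv_nonneg [simp]: "0 \<le> absv x"
  and absv_eq_0_iff [simp]: "absv x = 0 \<longleftrightarrow> x = 0"
  and absv_mult: "absv (x * y) = absv x * absv y"
  and absv_ultrametric: "absv (x + y) \<le> max (absv x) (absv y)"
  using nonarch unfolding nonarch_abs_def by blast+

lemma absv_0 [simp]: "absv 0 = 0"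
  by simp

lemma absv_1 [simp]: "absv 1 = 1"
  using absv_mult[of 1 1] absv_eq_0_iff[of 1] by (metis mult_cancel_left1 one_neq_zero)

lemma absv_uminus [simp]: "absv (- x) = absv x"
proof -
  have "absv (-1) * absv (-1) = 1" by (simp flip: absv_mult)
  hence "absv (-1) = 1" using absv_nonneg[of "-1"] square_eq_1_iff[of "absv (-1)"] by auto
  thus ?thesis using absv_mult[of "-1" x] by simp
qed

lemma absv_minus_commute: "absv (x - y) = absv (y - x)"
  by (metis absv_uminus minus_diff_eq)

lemma absv_power: "absv (x ^ n) = absv x ^ n"
  by (induction n) (auto simp: absv_mult)

lemma absv_inverse: "absv (inverse x) = inverse (absv x)"
proof (cases "x = 0")
  case False
  hence "absv x * absv (inverse x) = 1" by (metis absv_mult absv_1 right_inverse)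
  thus ?thesis by (metis inverse_unique)
qed simp

lemma absv_add_le: "absv x \<le> B \<Longrightarrow> absv y \<le> B \<Longrightarrow> absv (x + y) \<le> B"
  using absv_ultrametric[of x y] by simp

lemma absv_diff_trans: "absv (x - y) \<le> B \<Longrightarrow> absv (y - z) \<le> B \<Longrightarrow> absv (x - z) \<le> B"
  using absv_add_le[of "x - y" B "y - z"] by simp

lemma absv_sum_le:
  assumes "\<And>x. x \<in> A \<Longrightarrow> absv (f x) \<le> B" "0 \<le> B"
  shows "absv (sum f A) \<le> B"
  using assms by (induction A rule: infinite_finite_induct) (auto simp: absv_add_le)

lemma absv_of_nat_le_1: "absv (of_nat n) \<le> 1"
  by (induction n) (auto intro: absv_add_le)

lemma absv_of_int_le_1: "absv (of_int z) \<le> 1"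
  by (cases z rule: int_cases) (auto simp: absv_of_nat_le_1 simp del: of_nat_Suc)

lemma absv_add_eq_if_less:
  assumes "absv y < absv x" shows "absv (x + y) = absv x"
proof -
  have "absv (x + y) \<le> absv x" using absv_ultrametric[of x y] assms by simp
  moreover have "absv x \<le> max (absv (x + y)) (absv (- y))" using absv_ultrametric[of "x + y" "- y"] by simp
  ultimately show ?thesis using assms by (auto simp: max_def split: if_splits)
qed

lemma absv_le_1_if_close: "absv (x - y) \<le> 1 \<Longrightarrow> absv y \<le> 1 \<Longrightarrow> absv x \<le> 1"
  using absv_add_le[of "x - y" 1 y] by simp

lemma absv_power_diff_le:
  assumes "absv x \<le> 1" "absv y \<le> 1"
  shows "absv (x ^ m - y ^ m) \<le> absv (x - y)"
proof -
  have "x ^ m - y ^ m = (x - y) * (\<Sum>i<m. y ^ (m - Suc i) * x ^ i)" by (rule power_diff_sumr2)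
  moreover have "absv (\<Sum>i<m. y ^ (m - Suc i) * x ^ i) \<le> 1"
    using assms by (intro absv_sum_le) (auto simp: absv_mult absv_power intro!: mult_le_one power_le_one)
  ultimately show ?thesis by (simp add: absv_mult mult_left_le)
qed

lemma absv_eq_1_if_root_of_unity:
  assumes "x ^ d = 1" "0 < d" shows "absv x = 1"
  using assms absv_power[of x d] power_eq_iff_eq_base[of d "absv x" 1] by simp

end

lemma power_residues_cover_one_mod_p:
  fixes U W :: int and p n :: nat
  assumes "1 < p" "U mod int p = 1" "W mod int p = 1"
    and inj: "inj_on (\<lambda>m. U ^ m mod int p ^ Suc n) {..<p ^ n}"
  shows "\<exists>m<p ^ n. U ^ m mod int p ^ Suc n = W mod int p ^ Suc n"
proof -
  define R where "R = {x::int. 0 \<le> x \<and> x < int p ^ Suc n \<and> x mod int p = 1}"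
  have mod_mod_p: "(x mod int p ^ Suc n) mod int p = x mod int p" for x :: int
    by (rule mod_mod_cancel) simp
  have "R \<subseteq> (\<lambda>y. 1 + int p * y) ` {0..<int p ^ n}"
  proof
    fix x assume "x \<in> R"
    hence x: "0 \<le> x" "x < int p * int p ^ n" "x = 1 + int p * (x div int p)"
      using div_mult_mod_eq[of x "int p"] by (auto simp: R_def mult.commute)
    hence "int p * (x div int p) < int p * int p ^ n" by linarith
    hence "x div int p < int p ^ n" using assms(1) by (simp add: mult_less_cancel_left_pos)
    moreover have "0 \<le> x div int p" using x(1) by (simp add: div_int_pos_iff)
    ultimately show "x \<in> (\<lambda>y. 1 + int p * y) ` {0..<int p ^ n}" using x(3) by force
  qed
  moreover have "card ((\<lambda>y. 1 + int p * y) ` {0..<int p ^ n}) \<le> p ^ n"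
    by (rule order_trans[OF card_image_le]) (simp_all flip: of_nat_power)
  ultimately have "finite R" "card R \<le> p ^ n"
    by (auto intro: finite_subset dest: card_mono[rotated])
  moreover have "(\<lambda>m. U ^ m mod int p ^ Suc n) ` {..<p ^ n} \<subseteq> R"
  proof clarify
    fix m
    have "U ^ m mod int p = (U mod int p) ^ m mod int p" by (simp add: power_mod)
    thus "U ^ m mod int p ^ Suc n \<in> R" using assms(1,2) mod_mod_p[of "U ^ m"] by (simp add: R_def)
  qed
  moreover have "card ((\<lambda>m. U ^ m mod int p ^ Suc n) ` {..<p ^ n}) = p ^ n"
    using inj by (simp add: card_image)
  ultimately have "(\<lambda>m. U ^ m mod int p ^ Suc n) ` {..<p ^ n} = R" by (intro card_seteq) auto
  moreover have "W mod int p ^ Suc n \<in> R" using assms(1,3) mod_mod_p by (simp add: R_def)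
  ultimately show ?thesis by force
qed

locale padic_abs = nonarch_field absv for absv :: "'K::field_char_0 \<Rightarrow> real" +
  fixes p :: nat
  assumes prime_p: "prime p" and absv_p: "absv (of_nat p) = 1 / real p"
begin

lemma p_gt_1: "1 < p"
  using prime_p prime_gt_1_nat by blast

lemma absv_p_power: "absv (of_nat (p ^ e)) = 1 / real p ^ e"
  using absv_p by (simp add: absv_power power_one_over)

lemma p_power_antimono: "a \<le> b \<Longrightarrow> 1 / real p ^ b \<le> 1 / real p ^ a"
  using p_gt_1 by (intro divide_left_mono power_increasing) auto

lemma p_power_strict_antimono: "a < b \<Longrightarrow> 1 / real p ^ b < 1 / real p ^ a"
  using p_gt_1 by (intro divide_strict_left_mono power_strict_increasing) auto

lemma absv_of_int_if_dvd:
  assumes "int p ^ e dvd z" shows "absv (of_int z) \<le> 1 / real p ^ e"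
proof -
  obtain w where z: "z = int p ^ e * w" using assms by blast
  have "absv (of_int z) = absv (of_nat (p ^ e)) * absv (of_int w :: 'K)"
    by (simp add: z flip: absv_mult)
  thus ?thesis using absv_of_int_le_1[of w] absv_p_power[of e] by (simp add: divide_right_mono)
qed

lemma absv_of_int_coprime:
  assumes "coprime z (int p)" shows "absv (of_int z :: 'K) = 1"
proof -
  obtain x y where xy: "x * z + y * int p = 1" using bezout_int[of z "int p"] assms by auto
  have "1 = absv (of_int x * of_int z + of_int y * of_nat p :: 'K)"
    by (metis absv_1 of_int_1 of_int_add of_int_mult of_int_of_nat_eq xy)
  also have "\<dots> \<le> max (absv (of_int x :: 'K) * absv (of_int z :: 'K)) (absv (of_int y :: 'K) * (1 / real p))"
    using absv_ultrametric[of "of_int x * of_int z" "of_int y * of_nat p"] by (simp add: absv_mult absv_p)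
  finally have "1 \<le> max (absv (of_int x :: 'K) * absv (of_int z :: 'K)) (absv (of_int y :: 'K) * (1 / real p))" .
  moreover have "absv (of_int y :: 'K) * (1 / real p) < 1"
    using absv_of_int_le_1[of y] p_gt_1 by (simp add: divide_less_eq)
  ultimately have "1 \<le> absv (of_int x :: 'K) * absv (of_int z :: 'K)" by linarith
  moreover have "absv (of_int x :: 'K) * absv (of_int z :: 'K) \<le> absv (of_int z :: 'K)"
    using absv_of_int_le_1[of x] by (simp add: mult_left_le_one_le)
  ultimately show ?thesis using absv_of_int_le_1[of z] by linarith
qed

lemma p_dvd_if_absv_of_int_lt_1:
  assumes "absv (of_int z :: 'K) < 1" shows "int p dvd z"
  using absv_of_int_coprime[of z] assms prime_p
  by (metis less_irrefl coprime_commute prime_imp_coprime prime_nat_int_transfer)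

lemma absv_of_int_diff_if_cong:
  assumes "a mod int p ^ e = b mod int p ^ e"
  shows "absv (of_int a - of_int b :: 'K) \<le> 1 / real p ^ e"
  using absv_of_int_if_dvd[of e "a - b"] assms by (simp add: mod_eq_dvd_iff)

lemma mod_p_eq_1_if_close:
  assumes "absv (of_int z - x) \<le> 1 / real p" "absv (x - 1) \<le> 1 / real p"
  shows "z mod int p = 1"
proof -
  have "absv (of_int (z - 1) :: 'K) < 1"
    using absv_diff_trans[OF assms] p_power_strict_antimono[of 0 1] by simp
  hence "int p dvd z - 1" by (rule p_dvd_if_absv_of_int_lt_1)
  hence "z mod int p = 1 mod int p" by (simp add: mod_eq_dvd_iff)
  thus ?thesis using p_gt_1 by simp
qed

lemma eq_0_if_absv_arbitrarily_small:
  assumes "\<And>m. absv x \<le> 1 / real p ^ m" shows "x = 0"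
proof (rule ccontr)
  assume "x \<noteq> 0"
  hence "absv x > 0" using absv_nonneg[of x] absv_eq_0_iff[of x] by linarith
  then obtain m where "(1 / real p) ^ m < absv x"
    using real_arch_pow_inv[of "absv x" "1 / real p"] p_gt_1 by auto
  thus False using assms[of m] by (simp add: power_one_over)
qed

lemma roots_of_unity_eq_if_close:
  assumes "z1 ^ (p - 1) = 1" "z2 ^ (p - 1) = 1" "absv (z1 - z2) < 1"
  shows "z1 = z2"
proof -
  have a1: "absv z1 = 1" and a2: "absv z2 = 1"
    using assms absv_eq_1_if_root_of_unity p_gt_1 by auto
  define S where "S = (\<Sum>i<p - 1. z1 ^ (p - 1 - Suc i) * z2 ^ i)"
  have "(z2 - z1) * S = z2 ^ (p - 1) - z1 ^ (p - 1)" unfolding S_def by (rule power_diff_sumr2[symmetric])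
  hence zero: "(z2 - z1) * S = 0" using assms by simp
  \<comment> \<open>The unit \<open>p - 1\<close> dominates the rest of \<open>S\<close>, so \<open>S \<noteq> 0\<close>.\<close>
  have "(\<Sum>i<p - 1. z1 ^ (p - 1 - Suc i) * z1 ^ i) = (\<Sum>i<p - 1. z1 ^ (p - 2))"
    by (intro sum.cong refl) (auto simp flip: power_add)
  hence "S = of_nat (p - 1) * z1 ^ (p - 2) + (\<Sum>i<p - 1. z1 ^ (p - 1 - Suc i) * (z2 ^ i - z1 ^ i))"
    by (simp add: S_def algebra_simps sum.distrib sum_subtractf)
  moreover have "absv (of_nat (p - 1) * z1 ^ (p - 2)) = 1"
  proof -
    have "coprime (int (p - 1)) (int p)" using p_gt_1
      by (metis coprime_commute coprime_diff_one_left_nat coprime_int_iff Suc_diff_1 lessI less_trans zero_less_one diff_Suc_1)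
    thus ?thesis using absv_of_int_coprime[of "int (p - 1)"] by (simp add: absv_mult absv_power a1)
  qed
  moreover have "absv (\<Sum>i<p - 1. z1 ^ (p - 1 - Suc i) * (z2 ^ i - z1 ^ i)) \<le> absv (z1 - z2)"
    by (intro absv_sum_le)
       (auto simp: absv_mult absv_power a1 a2 absv_minus_commute[of z1] intro!: absv_power_diff_le[THEN order_trans])
  ultimately have "absv S = 1" using absv_add_eq_if_less assms(3) by force
  thus ?thesis using zero by auto
qed

lemma teich_eqI:
  assumes "\<zeta> ^ (p - 1) = 1" "absv (\<zeta> - of_int a) < 1"
  shows "teich absv p a = \<zeta>"
  unfolding teich_def
proof (rule the_equality)
  fix z assume z: "z ^ (p - 1) = 1 \<and> absv (z - of_int a) < 1"
  have "absv (z - \<zeta>) < 1"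
    using absv_ultrametric[of "z - of_int a" "of_int a - \<zeta>"] z assms(2) absv_minus_commute[of \<zeta>] by auto
  thus "z = \<zeta>" using roots_of_unity_eq_if_close z assms(1) by blast
qed (use assms in auto)

lemma absv_power_p_sub_1:
  assumes "odd p" "absv (y - 1) = 1 / real p ^ e" "1 \<le> e"
  shows "absv (y ^ p - 1) = 1 / real p ^ Suc e"
proof -
  define x where "x = y - 1"
  define g where "g i = of_nat (p choose i) * x ^ i" for i
  have absv_x: "absv x = 1 / real p ^ e" using assms by (simp add: x_def)
  have "y ^ p = (x + 1) ^ p" by (simp add: x_def)
  also have "\<dots> = (\<Sum>i\<le>p. g i)" by (simp add: binomial_ring g_def)
  also have "{..p} = insert 0 (insert 1 {2..p})" using p_gt_1 by auto
  finally have y_p: "y ^ p - 1 = of_nat p * x + (\<Sum>i\<in>{2..p}. g i)" by (simp add: g_def)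
  have "absv (g i) \<le> 1 / real p ^ (e + 2)" if "i \<in> {2..p}" for i
  proof (cases "i = p")
    case True
    have "p \<ge> 3" using p_gt_1 assms(1) by presburger
    hence "e * 3 \<le> e * p" by simp
    hence "e + 2 \<le> e * p" using assms(3) by linarith
    hence "1 / real p ^ (e * p) \<le> 1 / real p ^ (e + 2)" by (rule p_power_antimono)
    thus ?thesis by (simp add: g_def True absv_mult absv_power absv_x power_mult power_one_over)
  next
    case False
    have "p dvd (p choose i)" using dvd_choose_prime[of i p] that False prime_p by auto
    hence "absv (of_nat (p choose i) :: 'K) \<le> 1 / real p"
      using absv_of_int_if_dvd[of 1 "int (p choose i)"] by simp
    hence "absv (g i) \<le> (1 / real p) * (1 / real p ^ e) ^ 2"
      unfolding g_def absv_mult absv_power absv_x using that p_gt_1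
      by (intro mult_mono power_decreasing) (auto simp: power_le_one)
    also have "\<dots> = 1 / real p ^ (1 + 2 * e)"
      by (simp add: power_one_over power_add flip: power_mult power_mult_distrib) (simp add: mult.commute power_mult)
    also have "\<dots> \<le> 1 / real p ^ (e + 2)" using assms(3) by (intro p_power_antimono) simp
    finally show ?thesis .
  qed
  hence "absv (\<Sum>i\<in>{2..p}. g i) \<le> 1 / real p ^ (e + 2)" by (intro absv_sum_le) auto
  also have "\<dots> < 1 / real p ^ Suc e" by (intro p_power_strict_antimono) simp
  finally show ?thesis using absv_add_eq_if_less y_p by (simp add: absv_mult absv_p absv_x)
qed

lemma absv_power_sub_1_coprime:
  assumes "absv (y - 1) < 1" "\<not> p dvd m"
  shows "absv (y ^ m - 1) = absv (y - 1)"
proof -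
  have y: "absv y \<le> 1" using assms(1) by (intro absv_le_1_if_close[of y 1]) auto
  have "y ^ m - 1 ^ m = (y - 1) * (\<Sum>i<m. 1 ^ (m - Suc i) * y ^ i)" by (rule power_diff_sumr2)
  hence y_m: "y ^ m - 1 = (y - 1) * (of_nat m + (\<Sum>i<m. y ^ i - 1))" by (simp add: sum_subtractf)
  have "coprime (int m) (int p)" using assms(2) prime_p
    by (metis coprime_commute coprime_int_iff prime_imp_coprime)
  hence "absv (of_nat m :: 'K) = 1" using absv_of_int_coprime[of "int m"] by simp
  moreover have "absv (\<Sum>i<m. y ^ i - 1) \<le> absv (y - 1)"
    by (intro absv_sum_le) (use absv_power_diff_le[OF y, of 1] in auto)
  ultimately have "absv (of_nat m + (\<Sum>i<m. y ^ i - 1)) = 1" using absv_add_eq_if_less assms(1) by force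
  thus ?thesis by (simp add: y_m absv_mult)
qed

context
  fixes u :: 'K
  assumes odd_p: "odd p" and u_close_1: "absv (u - 1) = 1 / real p"
begin

lemma absv_u: "absv u = 1"
  using absv_add_eq_if_less[of "u - 1" 1] u_close_1 p_gt_1 by simp

lemma absv_u_power_sub_1: "0 < m \<Longrightarrow> \<exists>v. p ^ v \<le> m \<and> absv (u ^ m - 1) = 1 / real p ^ Suc v"
proof (induction m rule: less_induct)
  case (less m)
  show ?case
  proof (cases "p dvd m")
    case False
    have "absv (u ^ m - 1) = absv (u - 1)"
      using absv_power_sub_1_coprime[OF _ False] u_close_1 p_gt_1 by simp
    thus ?thesis using less.prems u_close_1 by (intro exI[of _ 0]) auto
  next
    case True
    then obtain m' where m: "m = p * m'" by blast
    have "0 < m'" "m' < m" using less.prems p_gt_1 m by auto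
    then obtain v where v: "p ^ v \<le> m'" "absv (u ^ m' - 1) = 1 / real p ^ Suc v" using less.IH by blast
    have "absv ((u ^ m') ^ p - 1) = 1 / real p ^ Suc (Suc v)" using absv_power_p_sub_1[OF odd_p v(2)] by simp
    moreover have "(u ^ m') ^ p = u ^ m" by (simp add: m mult.commute flip: power_mult)
    ultimately show ?thesis using v(1) m by (intro exI[of _ "Suc v"]) auto
  qed
qed

lemma u_power_inj:
  assumes "m1 < p ^ n" "m2 < p ^ n" "absv (u ^ m1 - u ^ m2) \<le> 1 / real p ^ Suc n"
  shows "m1 = m2"
proof -
  have no_collision: False if ab: "a < b" "b < p ^ n" "absv (u ^ b - u ^ a) \<le> 1 / real p ^ Suc n" for a b
  proof -
    obtain v where v: "p ^ v \<le> b - a" "absv (u ^ (b - a) - 1) = 1 / real p ^ Suc v"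
      using absv_u_power_sub_1[of "b - a"] ab(1) by (auto simp del: power_Suc)
    have "u ^ b - u ^ a = u ^ a * (u ^ (b - a) - 1)" using ab
      by (simp add: algebra_simps flip: power_add)
    hence "absv (u ^ b - u ^ a) = 1 / real p ^ Suc v" by (simp add: absv_mult absv_power absv_u v(2))
    moreover have "v < n" using v(1) ab p_gt_1 by (metis le_less_trans diff_le_self power_less_imp_less_exp)
    ultimately show False using ab(3) p_power_strict_antimono[of "Suc v" "Suc n"] by simp
  qed
  show ?thesis
  proof (rule ccontr)
    assume "m1 \<noteq> m2"
    thus False using no_collision[of m1 m2] no_collision[of m2 m1] assms absv_minus_commute[of "u ^ m1"]
      by (cases "m1 < m2") auto
  qed
qed

lemma u_power_approx:
  assumes u_Zp: "in_Zp absv u" and w_close_1: "absv (w - 1) \<le> 1 / real p"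
    and w_Zp: "\<And>M. \<exists>z::int. absv (w - of_int z) \<le> 1 / real p ^ M"
  shows "\<exists>m<p ^ n. absv (u ^ m - w) \<le> 1 / real p ^ Suc n"
proof -
  have "0 < 1 / real p ^ Suc n" using p_gt_1 by simp
  then obtain U where U: "absv (u - of_int U) < 1 / real p ^ Suc n"
    using u_Zp unfolding in_Zp_def by blast
  obtain W where W: "absv (w - of_int W) \<le> 1 / real p ^ Suc n" using w_Zp by blast
  have U_power: "absv (u ^ m - of_int (U ^ m)) \<le> 1 / real p ^ Suc n" for m
    using absv_power_diff_le[of u "of_int U" m] absv_u absv_of_int_le_1[of U] U by (simp del: power_Suc)
  have one_over_p: "1 / real p ^ Suc n \<le> 1 / real p" using p_power_antimono[of 1 "Suc n"] by simp
  have "U mod int p = 1"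
    using U one_over_p u_close_1 absv_minus_commute[of u] by (intro mod_p_eq_1_if_close[of _ u]) auto
  moreover have "W mod int p = 1"
    using W one_over_p w_close_1 absv_minus_commute[of w] by (intro mod_p_eq_1_if_close[of _ w]) auto
  moreover have "inj_on (\<lambda>m. U ^ m mod int p ^ Suc n) {..<p ^ n}"
  proof
    fix m1 m2 assume m: "m1 \<in> {..<p ^ n}" "m2 \<in> {..<p ^ n}"
      and "U ^ m1 mod int p ^ Suc n = U ^ m2 mod int p ^ Suc n"
    hence "absv (of_int (U ^ m1) - of_int (U ^ m2) :: 'K) \<le> 1 / real p ^ Suc n"
      by (intro absv_of_int_diff_if_cong)
    hence "absv (u ^ m1 - of_int (U ^ m2)) \<le> 1 / real p ^ Suc n"
      by (rule absv_diff_trans[OF U_power[of m1]])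
    hence "absv (u ^ m1 - u ^ m2) \<le> 1 / real p ^ Suc n"
      using U_power[of m2] absv_minus_commute[of "u ^ m2"] by (metis absv_diff_trans)
    thus "m1 = m2" using u_power_inj m by auto
  qed
  ultimately obtain m where m: "m < p ^ n" "U ^ m mod int p ^ Suc n = W mod int p ^ Suc n"
    using power_residues_cover_one_mod_p[OF p_gt_1] by blast
  have "absv (u ^ m - of_int W) \<le> 1 / real p ^ Suc n"
    using U_power[of m] absv_of_int_diff_if_cong[OF m(2)] by (rule absv_diff_trans)
  hence "absv (u ^ m - w) \<le> 1 / real p ^ Suc n"
    using W absv_minus_commute[of w] by (metis absv_diff_trans)
  thus ?thesis using m(1) by blast
qed

end

end

lemma prime_power_dvd_power_totient_sub_1:
  assumes "prime p" "coprime A p"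
  shows "int p ^ Suc m dvd int (A ^ (p ^ m * (p - 1))) - 1"
proof -
  have "coprime A (p ^ Suc m)" using assms(2) by simp
  from euler_theorem[OF this] have "[A ^ (p ^ m * (p - 1)) = 1] (mod p ^ Suc m)"
    using totient_prime_power_Suc[OF assms(1)] by simp
  hence "[int (A ^ (p ^ m * (p - 1))) = int 1] (mod int (p ^ Suc m))"
    using cong_int_iff by blast
  thus ?thesis by (simp add: cong_iff_dvd_diff)
qed

locale complete_padic_abs = padic_abs absv p for absv :: "'K::field_char_0 \<Rightarrow> real" and p +
  assumes complete: "\<forall>X::nat \<Rightarrow> 'K. (\<forall>e>0. \<exists>M. \<forall>m\<ge>M. \<forall>n\<ge>M. absv (X m - X n) < e) \<longrightarrow>
        (\<exists>L. \<forall>e>0. \<exists>M. \<forall>n\<ge>M. absv (X n - L) < e)"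
begin

lemma absv_power_p_power_diff:
  assumes "coprime A p" "m \<le> M"
  shows "absv (of_nat (A ^ (p ^ M)) - of_nat (A ^ (p ^ m)) :: 'K) \<le> 1 / real p ^ Suc m"
  using assms(2)
proof (induction M rule: dec_induct)
  case (step M)
  have "p ^ Suc M = p ^ M + p ^ M * (p - 1)" using p_gt_1 by (simp add: algebra_simps)
  hence "A ^ (p ^ Suc M) = A ^ (p ^ M) * A ^ (p ^ M * (p - 1))" by (simp only: power_add)
  hence "int (A ^ (p ^ Suc M)) - int (A ^ (p ^ M)) = int (A ^ (p ^ M)) * (int (A ^ (p ^ M * (p - 1))) - 1)"
    by (simp add: algebra_simps)
  hence "int p ^ Suc M dvd int (A ^ (p ^ Suc M)) - int (A ^ (p ^ M))"
    using prime_power_dvd_power_totient_sub_1[OF prime_p assms(1), of M] by simp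
  hence "absv (of_nat (A ^ (p ^ Suc M)) - of_nat (A ^ (p ^ M)) :: 'K) \<le> 1 / real p ^ Suc M"
    using absv_of_int_if_dvd by fastforce
  also have "\<dots> \<le> 1 / real p ^ Suc m" using step.hyps by (intro p_power_antimono) simp
  finally show ?case by (rule absv_diff_trans[OF _ step.IH])
qed simp

lemma limit_of_power_p_powers:
  assumes "coprime A p"
  obtains L :: 'K where "\<And>m. absv (L - of_nat (A ^ (p ^ m))) \<le> 1 / real p ^ Suc m"
proof -
  define X where "X m = (of_nat (A ^ (p ^ m)) :: 'K)" for m
  have X_close: "absv (X m - X n) \<le> 1 / real p ^ Suc M" if "M \<le> m" "M \<le> n" for M m n
    using absv_power_p_power_diff[OF assms, of M m] absv_power_p_power_diff[OF assms, of M n] that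
    by (auto simp: X_def absv_minus_commute intro: absv_diff_trans)
  have "\<exists>M. \<forall>m\<ge>M. \<forall>n\<ge>M. absv (X m - X n) < e" if "e > 0" for e
  proof -
    obtain M where "(1 / real p) ^ M < e"
      using real_arch_pow_inv[OF \<open>e > 0\<close>, of "1 / real p"] p_gt_1 by auto
    hence "1 / real p ^ Suc M < e"
      using p_power_antimono[of M "Suc M"] by (simp add: power_one_over)
    thus ?thesis using X_close by (meson le_less_trans)
  qed
  then obtain L where L: "\<And>e. e > 0 \<Longrightarrow> \<exists>M. \<forall>n\<ge>M. absv (X n - L) < e"
    using complete by blast
  have "absv (L - X m) \<le> 1 / real p ^ Suc m" for m
  proof (rule field_le_epsilon)
    fix e :: real assume "e > 0"
    obtain M where M: "\<forall>n\<ge>M. absv (X n - L) < e" using L[OF \<open>e > 0\<close>] by blast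
    have "absv (L - X (max M m)) \<le> 1 / real p ^ Suc m + e"
      using M by (auto simp: absv_minus_commute less_imp_le add_increasing)
    moreover have "absv (X (max M m) - X m) \<le> 1 / real p ^ Suc m + e"
      using X_close[of m "max M m" m] \<open>e > 0\<close> by auto
    ultimately show "absv (L - X m) \<le> 1 / real p ^ Suc m + e" by (rule absv_diff_trans)
  qed
  thus ?thesis using that by (auto simp: X_def)
qed

lemma teich_props:
  assumes "coprime a (int p)" "0 \<le> a"
  shows teich_power_p_sub_1: "teich absv p a ^ (p - 1) = 1"
    and teich_close_to_powers: "\<And>m. absv (teich absv p a - of_int (a ^ (p ^ m))) \<le> 1 / real p ^ Suc m"
proof -
  have coprime_A: "coprime (nat a) p" using assms by (metis coprime_int_iff int_nat_eq)
  obtain L :: 'K where L: "\<And>m. absv (L - of_int (a ^ (p ^ m))) \<le> 1 / real p ^ Suc m"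
    using limit_of_power_p_powers[OF coprime_A] assms(2) by (metis of_int_of_nat_eq of_nat_power int_nat_eq)
  have "absv (L - of_int (a ^ p ^ 0)) \<le> 1" using L[of 0] p_power_antimono[of 0 1] by simp
  hence absv_L: "absv L \<le> 1" by (rule absv_le_1_if_close[OF _ absv_of_int_le_1])
  have "absv (L ^ (p - 1) - 1) \<le> 1 / real p ^ m" for m
  proof -
    have "absv (L ^ (p - 1) - of_int (a ^ (p ^ m)) ^ (p - 1)) \<le> 1 / real p ^ Suc m"
      using absv_power_diff_le[OF absv_L absv_of_int_le_1[of "a ^ p ^ m"], of "p - 1"] L[of m] by linarith
    moreover have "int p ^ Suc m dvd (a ^ p ^ m) ^ (p - 1) - 1"
      using prime_power_dvd_power_totient_sub_1[OF prime_p coprime_A, of m] assms(2)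
      by (simp add: power_mult)
    hence "absv (of_int (a ^ (p ^ m)) ^ (p - 1) - 1 :: 'K) \<le> 1 / real p ^ Suc m"
      using absv_of_int_if_dvd by fastforce
    ultimately have "absv (L ^ (p - 1) - 1) \<le> 1 / real p ^ Suc m" by (rule absv_diff_trans)
    thus ?thesis using p_power_antimono[of m "Suc m"] by linarith
  qed
  hence L_root: "L ^ (p - 1) = 1" using eq_0_if_absv_arbitrarily_small[of "L ^ (p - 1) - 1"] by simp
  have "absv (L - of_int a) < 1" using L[of 0] p_power_strict_antimono[of 0 1] by simp
  hence "teich absv p a = L" by (rule teich_eqI[OF L_root])
  thus "teich absv p a ^ (p - 1) = 1" "\<And>m. absv (teich absv p a - of_int (a ^ (p ^ m))) \<le> 1 / real p ^ Suc m"
    using L_root L by auto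
qed

lemma absv_teich:
  assumes "coprime a (int p)" "0 \<le> a"
  shows "absv (teich absv p a) = 1"
  using absv_eq_1_if_root_of_unity[OF teich_power_p_sub_1[OF assms]] p_gt_1 by simp

lemma unit_part_props:
  assumes "coprime a (int p)" "0 \<le> a"
  shows unit_part_close_1: "absv (of_int a * inverse (teich absv p a) - 1) \<le> 1 / real p"
    and unit_part_approx: "\<exists>y::int. absv (of_int a * inverse (teich absv p a) - of_int y) \<le> 1 / real p ^ M"
proof -
  define z where "z = teich absv p a"
  have z_root: "z ^ (p - 1) = 1" and z_close: "\<And>m. absv (z - of_int (a ^ (p ^ m))) \<le> 1 / real p ^ Suc m"
    using teich_props[OF assms] by (simp_all add: z_def)
  have absv_z: "absv z = 1" using absv_teich[OF assms] by (simp add: z_def)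
  hence "z \<noteq> 0" by auto
  have "of_int a * inverse z - 1 = (of_int a - z) * inverse z" using \<open>z \<noteq> 0\<close> by (simp add: field_simps)
  hence "absv (of_int a * inverse z - 1) \<le> 1 / real p"
    using z_close[of 0] absv_minus_commute[of z] by (simp add: absv_mult absv_inverse absv_z)
  thus "absv (of_int a * inverse (teich absv p a) - 1) \<le> 1 / real p" by (simp add: z_def)
  have "z * z ^ (p - 2) = z ^ (p - 1)" using p_gt_1 by (simp flip: power_Suc) (simp add: Suc_diff_Suc numeral_2_eq_2)
  hence inverse_z: "inverse z = z ^ (p - 2)" using z_root \<open>z \<noteq> 0\<close> by (metis inverse_unique)
  \<comment> \<open>\<open>z\<close> is a limit of integers and \<open>z\<^sup>-\<^sup>1 = z\<^sup>p\<^sup>-\<^sup>2\<close>, so \<open>a z\<^sup>-\<^sup>1\<close> is one as well.\<close>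
  have "absv (z ^ (p - 2) - of_int (a ^ p ^ M) ^ (p - 2)) \<le> 1 / real p ^ M"
    using absv_power_diff_le[of z "of_int (a ^ p ^ M)" "p - 2"] absv_z absv_of_int_le_1[of "a ^ p ^ M"]
          z_close[of M] p_power_antimono[of M "Suc M"] by simp
  hence "absv (of_int a * inverse z - of_int (a * (a ^ p ^ M) ^ (p - 2))) \<le> 1 / real p ^ M"
    unfolding inverse_z using absv_of_int_le_1[of a]
    by (simp add: absv_mult mult_le_one order_trans[OF mult_left_le_one_le] flip: right_diff_distrib)
  thus "\<exists>y::int. absv (of_int a * inverse (teich absv p a) - of_int y) \<le> 1 / real p ^ M"
    unfolding z_def by blast
qed

lemma u_power_mexp_close:
  assumes "odd p" "absv (u - 1) = 1 / real p" "in_Zp absv u" "coprime a (int p)" "0 \<le> a"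
  shows "absv (u ^ mexp absv p u n a - of_int a * inverse (teich absv p a)) \<le> 1 / real p ^ Suc n"
proof -
  define w where "w = of_int a * inverse (teich absv p a)"
  obtain m where m: "m < p ^ n" "absv (u ^ m - w) \<le> 1 / real p ^ Suc n"
    using u_power_approx[OF assms(1-3) unit_part_close_1[OF assms(4,5)] unit_part_approx[OF assms(4,5)]]
    unfolding w_def by blast
  have "m' = m" if "m' < p ^ n" "absv (u ^ m' - w) \<le> 1 / real p ^ Suc n" for m'
    using that m absv_minus_commute[of w] absv_diff_trans u_power_inj[OF assms(1,2)] by metis
  hence "\<exists>!m. m < p ^ n \<and> absv (u ^ m - w) \<le> 1 / real p ^ (n + 1)" using m by auto
  hence "mexp absv p u n a < p ^ n \<and> absv (u ^ mexp absv p u n a - w) \<le> 1 / real p ^ (n + 1)"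
    unfolding mexp_def w_def by (rule theI')
  thus ?thesis by (simp add: w_def)
qed

end

lemma Cp_setup_imp_complete_padic_abs:
  assumes "Cp_setup absv p \<iota>" "prime p"
  shows "complete_padic_abs absv p"
  using assms by unfold_locales (simp_all add: Cp_setup_def)

section \<open>Cusp forms decay exponentially at every cusp\<close>

lemma power_div_fact_le_exp:
  fixes y :: real assumes "0 \<le> y" shows "y ^ n / fact n \<le> exp y"
proof -
  define f where "f i = inverse (fact i) * y ^ i" for i
  have "sum f {n} \<le> suminf f"
    by (rule sum_le_suminf) (use summable_exp[of y] assms in \<open>auto simp: f_def[abs_def]\<close>)
  moreover have "suminf f = exp y" by (simp add: f_def[abs_def] exp_def divide_inverse ac_simps)
  ultimately show ?thesis by (simp add: f_def divide_inverse ac_simps)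
qed

lemma exp_neg_inverse_le:
  fixes A t :: real assumes "0 < A" "0 < t"
  shows "exp (- (A / t)) \<le> fact k * (t / A) ^ k"
proof -
  have "(A / t) ^ k / fact k \<le> exp (A / t)" using assms by (intro power_div_fact_le_exp) auto
  thus ?thesis using assms by (simp add: exp_minus field_simps power_divide)
qed

lemma norm_exp_2_pi_i_div:
  fixes h :: real
  shows "norm (exp (2 * of_real pi * \<i> * w / of_real h)) = exp (- 2 * pi * Im w / h)"
  by (simp add: norm_exp_eq_Re Re_divide field_simps power2_eq_square)

lemma Im_mult_div_2_pi_i:
  fixes h :: real
  shows "Im (of_real h * z / (2 * of_real pi * \<i>)) = - h * Re z / (2 * pi)"
  by (simp add: Im_divide field_simps power2_eq_square)

lemma Schwarz_bound_on_half_disc: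
  assumes hol: "g holomorphic_on ball 0 1" and "g 0 = 0"
  obtains C where "\<And>q. norm q < 1/2 \<Longrightarrow> norm (g q) \<le> C * norm q"
proof -
  have "compact (g ` cball 0 (1/2))"
    by (intro compact_continuous_image holomorphic_on_imp_continuous_on holomorphic_on_subset[OF hol]) auto
  then obtain M where M: "\<And>q. q \<in> cball 0 (1/2) \<Longrightarrow> norm (g q) \<le> M"
    using compact_imp_bounded bounded_iff by (metis imageI)
  define M' where "M' = max M 0 + 1"
  have "M' > 0" by (simp add: M'_def)
  define G where "G z = g (z / 2) / of_real M'" for z
  have "norm (g q) \<le> 2 * M' * norm q" if "norm q < 1/2" for q
  proof -
    have "G holomorphic_on ball 0 1" unfolding G_def using \<open>M' > 0\<close>
      by (intro holomorphic_intros holomorphic_on_compose_gen[OF _ hol, unfolded o_def]) auto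
    moreover have "norm (G z) < 1" if "norm z < 1" for z
    proof -
      have "norm (g (z / 2)) \<le> M" using that by (intro M) (auto simp: norm_divide)
      thus ?thesis using \<open>M' > 0\<close> by (simp add: G_def norm_divide M'_def)
    qed
    moreover have "G 0 = 0" "norm (2 * q) < 1" using that \<open>g 0 = 0\<close> by (auto simp: G_def)
    ultimately have "norm (G (2 * q)) \<le> norm (2 * q)" by (intro Schwarz_Lemma(1)) auto
    thus ?thesis using \<open>M' > 0\<close> by (simp add: G_def norm_divide field_simps)
  qed
  thus thesis by (rule that)
qed

text \<open>An \<open>h\<close>-periodic holomorphic function \<open>F\<close> on the upper half plane factors as
  \<open>F w = fun_of_q (exp (2 \<pi> i w / h))\<close> through the punctured unit disc.\<close>

context
  fixes F :: "complex \<Rightarrow> complex" and h :: real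
  assumes holomorphic: "F holomorphic_on upper_half" and h_pos: "h > 0"
    and periodic: "\<And>w. w \<in> upper_half \<Longrightarrow> F (w + of_real h) = F w"
begin

lemma periodic_int:
  assumes "w \<in> upper_half" shows "F (w + of_int n * of_real h) = F w"
proof -
  have nat: "F (w + of_nat m * of_real h) = F w" if "w \<in> upper_half" for w m
    using that
  proof (induction m)
    case (Suc m)
    have "w + of_nat m * of_real h \<in> upper_half" using Suc.prems h_pos by (simp add: upper_half_def)
    from periodic[OF this] Suc show ?case by (simp add: algebra_simps)
  qed simp
  show ?thesis
  proof (cases "n \<ge> 0")
    case True thus ?thesis using nat[OF assms, of "nat n"] by simp
  next
    case False
    have "w - of_int (- n) * of_real h \<in> upper_half" using assms h_pos False by (simp add: upper_half_def)
    from nat[OF this, of "nat (- n)"] False show ?thesis by simp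
  qed
qed

lemma periodic_eq_if_exp_eq:
  assumes "w \<in> upper_half" "w' \<in> upper_half"
    and "exp (2 * of_real pi * \<i> * w' / of_real h) = exp (2 * of_real pi * \<i> * w / of_real h)"
  shows "F w' = F w"
proof -
  obtain n :: int where "2 * of_real pi * \<i> * w' / of_real h =
      2 * of_real pi * \<i> * w / of_real h + of_real (of_int (2 * n) * pi) * \<i>"
    using assms(3) unfolding exp_eq by blast
  hence "(2 * of_real pi * \<i>) * (w' - (w + of_int n * of_real h)) = 0" using h_pos by (simp add: field_simps)
  hence "w' = w + of_int n * of_real h" by simp
  thus ?thesis using periodic_int[OF assms(1)] by simp
qed

definition fun_of_q :: "complex \<Rightarrow> complex" where
  "fun_of_q q = (if q = 0 then 0 else F (of_real h * Ln q / (2 * of_real pi * \<i>)))"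

lemma Ln_branch_in_upper_half:
  assumes "q \<noteq> 0" "norm q < 1" "Re L = ln (norm q)"
  shows "of_real h * L / (2 * of_real pi * \<i>) \<in> upper_half"
proof -
  have "ln (norm q) < 0" using assms by simp
  hence "0 < h * (- ln (norm q)) / (2 * pi)" using h_pos by (intro divide_pos_pos mult_pos_pos) auto
  thus ?thesis using assms by (simp add: upper_half_def Im_mult_div_2_pi_i)
qed

lemma fun_of_q_eq:
  assumes "w \<in> upper_half" "exp (2 * of_real pi * \<i> * w / of_real h) = q"
  shows "fun_of_q q = F w"
proof -
  have "norm q < 1" using assms h_pos by (auto simp: norm_exp_2_pi_i_div[symmetric] upper_half_def)
  moreover have "q \<noteq> 0" using assms(2) by auto
  ultimately have "of_real h * Ln q / (2 * of_real pi * \<i>) \<in> upper_half"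
    by (intro Ln_branch_in_upper_half) (auto simp: Re_Ln)
  hence "F (of_real h * Ln q / (2 * of_real pi * \<i>)) = F w"
    by (rule periodic_eq_if_exp_eq[OF assms(1)]) (use \<open>q \<noteq> 0\<close> h_pos assms(2) in simp)
  thus ?thesis using \<open>q \<noteq> 0\<close> by (simp add: fun_of_q_def)
qed

lemma fun_of_q_holomorphic_on_branch:
  assumes "open U" and \<phi>: "\<phi> holomorphic_on U"
    and "\<And>q. q \<in> U \<Longrightarrow> \<phi> q \<in> upper_half"
    and "\<And>q. q \<in> U \<Longrightarrow> exp (2 * of_real pi * \<i> * \<phi> q / of_real h) = q"
  shows "fun_of_q holomorphic_on U"
proof -
  have "(F \<circ> \<phi>) holomorphic_on U"
    by (rule holomorphic_on_compose_gen[OF \<phi> holomorphic]) (use assms(3) in auto)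
  moreover have "(F \<circ> \<phi>) q = fun_of_q q" if "q \<in> U" for q
    using fun_of_q_eq[OF assms(3)[OF that] assms(4)[OF that]] by simp
  ultimately show ?thesis using holomorphic_transform by metis
qed

text \<open>On the punctured disc, two branches of the logarithm (slit along the negative and along the
  positive real axis) together exhibit \<open>fun_of_q\<close> as a composition of holomorphic maps.\<close>

lemma fun_of_q_holomorphic_punctured: "fun_of_q holomorphic_on (ball 0 1 - {0})"
proof -
  define U1 where "U1 = ball (0::complex) 1 - \<real>\<^sub>\<le>\<^sub>0"
  define U2 where "U2 = ball (0::complex) 1 - uminus ` \<real>\<^sub>\<le>\<^sub>0"
  have "q \<in> uminus ` A \<longleftrightarrow> - q \<in> A" for q :: complex and A by force
  hence U2: "q \<in> U2 \<longleftrightarrow> norm q < 1 \<and> - q \<notin> \<real>\<^sub>\<le>\<^sub>0" for q by (simp add: U2_def)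
  have "open U1" "open U2" unfolding U1_def U2_def by (auto intro!: open_Diff closed_negations)
  have "fun_of_q holomorphic_on U1"
  proof (rule fun_of_q_holomorphic_on_branch[OF \<open>open U1\<close>])
    show "(\<lambda>q. of_real h * Ln q / (2 * of_real pi * \<i>)) holomorphic_on U1"
      unfolding U1_def by (intro holomorphic_intros) auto
  next
    fix q assume "q \<in> U1"
    hence "q \<noteq> 0" "norm q < 1" by (auto simp: U1_def)
    thus "of_real h * Ln q / (2 * of_real pi * \<i>) \<in> upper_half"
      by (intro Ln_branch_in_upper_half) (auto simp: Re_Ln)
    show "exp (2 * of_real pi * \<i> * (of_real h * Ln q / (2 * of_real pi * \<i>)) / of_real h) = q"
      using \<open>q \<noteq> 0\<close> h_pos by simp
  qed
  moreover have "fun_of_q holomorphic_on U2"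
  proof (rule fun_of_q_holomorphic_on_branch[OF \<open>open U2\<close>])
    have "(\<lambda>q. Ln (- q)) holomorphic_on U2"
      by (rule holomorphic_on_compose_gen[of uminus _ Ln "- \<real>\<^sub>\<le>\<^sub>0", unfolded o_def])
         (auto simp: U2 intro!: holomorphic_intros)
    moreover have "z \<notin> \<real>\<^sub>\<ge>\<^sub>0" if "z \<in> U2" for z
      using that by (auto simp: U2 nonneg_Reals_def nonpos_Reals_def)
    ultimately show "(\<lambda>q. of_real h * (Ln (- q) + of_real pi * \<i>) / (2 * of_real pi * \<i>)) holomorphic_on U2"
      by (intro holomorphic_intros) auto
  next
    fix q assume "q \<in> U2"
    hence "q \<noteq> 0" "norm q < 1" by (auto simp: U2)
    thus "of_real h * (Ln (- q) + of_real pi * \<i>) / (2 * of_real pi * \<i>) \<in> upper_half"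
      by (intro Ln_branch_in_upper_half) (auto simp: Re_Ln)
    have "exp (Ln (- q) + of_real pi * \<i>) = q" using \<open>q \<noteq> 0\<close> by (simp add: exp_add exp_pi_i')
    thus "exp (2 * of_real pi * \<i> * (of_real h * (Ln (- q) + of_real pi * \<i>) / (2 * of_real pi * \<i>)) / of_real h) = q"
      using h_pos by simp
  qed
  moreover have "ball 0 1 - {0} = U1 \<union> U2"
    by (auto simp: U1_def U2 nonpos_Reals_def)
  ultimately show ?thesis using \<open>open U1\<close> \<open>open U2\<close> by (metis holomorphic_on_Un)
qed

lemma fun_of_q_holomorphic:
  assumes decay: "\<forall>e>0. \<exists>Y. \<forall>w. Y < Im w \<longrightarrow> norm (F w) < e"
  shows "fun_of_q holomorphic_on ball 0 1"
proof (rule no_isolated_singularity'[of "{0}"])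
  show "fun_of_q holomorphic_on ball 0 1 - {0}" by (rule fun_of_q_holomorphic_punctured)
  have "(fun_of_q \<longlongrightarrow> 0) (at 0)"
    unfolding LIM_eq
  proof (intro allI impI)
    fix r :: real assume "r > 0"
    then obtain Y where Y: "\<And>w. Y < Im w \<Longrightarrow> norm (F w) < r" using decay by blast
    define s where "s = exp (- 2 * pi * (max Y 0 + 1) / h)"
    have "s > 0" "s < 1" using h_pos by (auto simp: s_def)
    have "norm (fun_of_q x - 0) < r" if x: "x \<noteq> 0" "norm (x - 0) < s" for x
    proof -
      have "ln (norm x) < ln s" using x \<open>s > 0\<close> by simp
      hence "- ln (norm x) * h > 2 * pi * (max Y 0 + 1)" using h_pos by (simp add: s_def field_simps)
      hence "- h * ln (norm x) / (2 * pi) > max Y 0 + 1" by (simp add: field_simps)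
      hence "Y < Im (of_real h * Ln x / (2 * of_real pi * \<i>))"
        using x by (simp add: Im_mult_div_2_pi_i Re_Ln)
      thus ?thesis using Y x by (simp add: fun_of_q_def)
    qed
    thus "\<exists>s>0. \<forall>x. x \<noteq> 0 \<and> norm (x - 0) < s \<longrightarrow> norm (fun_of_q x - 0) < r" using \<open>s > 0\<close> by blast
  qed
  thus "(fun_of_q \<longlongrightarrow> fun_of_q z) (at z within ball 0 1)" if "z \<in> {0}" for z
    using that by (simp add: fun_of_q_def tendsto_within_subset[OF _ subset_UNIV])
qed auto

text \<open>Since \<open>|q| = exp (- 2 \<pi> Im w / h)\<close>, a linear bound on \<open>fun_of_q\<close> near \<open>0\<close> is exponential decay of \<open>F\<close>.\<close>

lemma periodic_exp_decay:
  assumes decay: "\<forall>e>0. \<exists>Y. \<forall>w. Y < Im w \<longrightarrow> norm (F w) < e"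
  shows "\<exists>C Y. \<forall>w. Y \<le> Im w \<longrightarrow> norm (F w) \<le> C * exp (- 2 * pi * Im w / h)"
proof -
  obtain C where C: "\<And>q. norm q < 1/2 \<Longrightarrow> norm (fun_of_q q) \<le> C * norm q"
    using Schwarz_bound_on_half_disc[OF fun_of_q_holomorphic[OF decay]] by (auto simp: fun_of_q_def)
  have "norm (F w) \<le> C * exp (- 2 * pi * Im w / h)" if "h \<le> Im w" for w
  proof -
    define q where "q = exp (2 * of_real pi * \<i> * w / of_real h)"
    have "w \<in> upper_half" using that h_pos by (simp add: upper_half_def)
    have norm_q: "norm q = exp (- 2 * pi * Im w / h)" by (simp add: q_def norm_exp_2_pi_i_div)
    have "exp (- 2 * pi * Im w / h) \<le> exp (- 2 * pi)"
      using that h_pos by (simp add: field_simps)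
    also have "\<dots> < 1 / 2"
    proof -
      have "2 < 1 + 2 * pi" using pi_gt3 by simp
      also have "\<dots> \<le> exp (2 * pi)" by (rule exp_ge_add_one_self)
      finally show ?thesis by (simp add: exp_minus field_simps)
    qed
    finally have "norm (fun_of_q q) \<le> C * norm q" using norm_q by (intro C) simp
    thus ?thesis using fun_of_q_eq[OF \<open>w \<in> upper_half\<close>] norm_q by (simp add: q_def)
  qed
  thus ?thesis by blast
qed

end

lemma Im_moeb:
  assumes "a * d - b * c = 1"
  shows "Im (moeb a b c d w) = Im w / (norm (of_int c * w + of_int d))\<^sup>2"
proof -
  have "Im (of_int a * w + of_int b) * Re (of_int c * w + of_int d) -
        Re (of_int a * w + of_int b) * Im (of_int c * w + of_int d) = of_int (a * d - b * c) * Im w"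
    by (simp add: algebra_simps)
  thus ?thesis using assms by (simp add: moeb_def Im_divide')
qed

lemma moeb_denom_nonzero:
  assumes "a * d - b * c = 1" "w \<in> upper_half"
  shows "of_int c * w + of_int d \<noteq> 0"
proof
  assume denom: "of_int c * w + of_int d = 0"
  hence "Im (of_int c * w + of_int d) = 0" by simp
  hence "c = 0" using assms(2) by (simp add: upper_half_def)
  thus False using denom assms(1) by simp
qed

lemma moeb_in_upper_half:
  assumes "a * d - b * c = 1" "w \<in> upper_half"
  shows "moeb a b c d w \<in> upper_half"
  using assms Im_moeb[OF assms(1), of w] moeb_denom_nonzero[OF assms]
  by (simp add: upper_half_def)

text \<open>Conjugating the translation \<open>w \<mapsto> w + t\<close> by \<open>\<gamma> = (a b; c d)\<close> gives the matrix
  \<open>(1 - a c t, a\<^sup>2 t; - c\<^sup>2 t, 1 + a c t)\<close>.\<close>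

lemma moeb_conj_translation:
  fixes a b c d t :: int
  assumes det: "a * d - b * c = 1"
    and nz: "of_int c * w + of_int d \<noteq> 0" "of_int c * (w + of_int t) + of_int d \<noteq> 0"
  shows "of_int (- (c\<^sup>2 * t)) * moeb a b c d w + of_int (1 + a * c * t) =
           (of_int c * (w + of_int t) + of_int d) / (of_int c * w + of_int d)"
    and "moeb (1 - a * c * t) (a\<^sup>2 * t) (- (c\<^sup>2 * t)) (1 + a * c * t) (moeb a b c d w) =
           moeb a b c d (w + of_int t)"
proof -
  have "a * d = 1 + b * c" using det by simp
  hence "(of_int (a * d) :: complex) = of_int (1 + b * c)" by (rule arg_cong)
  hence ad: "of_int a * of_int d - 1 - of_int b * of_int c = (0::complex)" by simp
  have "of_int (- (c\<^sup>2 * t)) * (of_int a * w + of_int b) + of_int (1 + a * c * t) * (of_int c * w + of_int d)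
      - (of_int c * (w + of_int t) + of_int d) = of_int c * of_int t * (of_int a * of_int d - 1 - of_int b * of_int c :: complex)"
    by (simp add: algebra_simps power2_eq_square)
  hence lower: "of_int (- (c\<^sup>2 * t)) * (of_int a * w + of_int b) + of_int (1 + a * c * t) * (of_int c * w + of_int d)
      = of_int c * (w + of_int t) + (of_int d :: complex)"
    using ad by simp
  have "of_int (1 - a * c * t) * (of_int a * w + of_int b) + of_int (a\<^sup>2 * t) * (of_int c * w + of_int d)
      - (of_int a * (w + of_int t) + of_int b) = of_int a * of_int t * (of_int a * of_int d - 1 - of_int b * of_int c :: complex)"
    by (simp add: algebra_simps power2_eq_square)
  hence upper: "of_int (1 - a * c * t) * (of_int a * w + of_int b) + of_int (a\<^sup>2 * t) * (of_int c * w + of_int d)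
      = of_int a * (w + of_int t) + (of_int b :: complex)"
    using ad by simp
  show denom: "of_int (- (c\<^sup>2 * t)) * moeb a b c d w + of_int (1 + a * c * t) =
           (of_int c * (w + of_int t) + of_int d) / (of_int c * w + of_int d)"
    unfolding lower[symmetric] moeb_def using nz(1) by (simp add: field_simps)
  have "of_int (1 - a * c * t) * moeb a b c d w + of_int (a\<^sup>2 * t) =
           (of_int a * (w + of_int t) + of_int b) / (of_int c * w + of_int d)"
    unfolding upper[symmetric] moeb_def using nz(1) by (simp add: field_simps)
  thus "moeb (1 - a * c * t) (a\<^sup>2 * t) (- (c\<^sup>2 * t)) (1 + a * c * t) (moeb a b c d w) =
           moeb a b c d (w + of_int t)"
    using nz denom by (simp add: moeb_def[of "1 - a * c * t"] moeb_def[of a b c d "w + of_int t"])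
qed

lemma dirichlet_char_periodic:
  assumes "dirichlet_char N \<epsilon>"
  shows "\<epsilon> (m + int N * t) = \<epsilon> m"
proof -
  have nat: "\<epsilon> (m + int N * int n) = \<epsilon> m" for m n
  proof (induction n)
    case (Suc n)
    have "\<epsilon> (m + int N * int (Suc n)) = \<epsilon> ((m + int N * int n) + int N)" by (simp add: algebra_simps)
    thus ?case using assms Suc by (simp add: dirichlet_char_def)
  qed simp
  show ?thesis
    using nat[of m "nat t"] nat[of "m + int N * t" "nat (- t)"] by (cases "t \<ge> 0") (simp_all add: algebra_simps)
qed

lemma moeb_on_vertical_line:
  fixes \<alpha> \<beta> c d :: int and t :: real
  assumes det: "\<alpha> * d - \<beta> * c = 1" and "c \<noteq> 0" "t \<noteq> 0"
  defines "w \<equiv> - of_int d / of_int c + \<i> / (of_int c ^ 2 * of_real t)"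
  shows "of_int c * w + of_int d = \<i> / (of_int c * of_real t)"
    and "moeb \<alpha> \<beta> c d w = of_real (of_int \<alpha> / of_int c) + \<i> * of_real t"
    and "Im w = 1 / (real_of_int c ^ 2 * t)"
proof -
  have c: "(of_int c :: complex) \<noteq> 0" and t: "(of_real t :: complex) \<noteq> 0" using assms by auto
  show denom: "of_int c * w + of_int d = \<i> / (of_int c * of_real t)"
    using c t by (simp add: w_def field_simps power2_eq_square)
  have "\<alpha> * d = 1 + \<beta> * c" using det by simp
  hence "(of_int (\<alpha> * d) :: complex) = of_int (1 + \<beta> * c)" by (rule arg_cong)
  hence \<alpha>d: "of_int \<alpha> * of_int d = (1 + of_int \<beta> * of_int c :: complex)" by simp
  have "of_int \<alpha> * w + of_int \<beta> =
      (- (of_int \<alpha> * of_int d) + of_int \<beta> * of_int c) / of_int c + \<i> * of_int \<alpha> / (of_int c ^ 2 * of_real t)"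
    using c t unfolding w_def by (simp add: field_simps power2_eq_square)
  also have "\<dots> = (- 1 + \<i> * of_int \<alpha> / (of_int c * of_real t)) / of_int c"
    unfolding \<alpha>d using c t by (simp add: field_simps power2_eq_square)
  finally have "of_int \<alpha> * w + of_int \<beta> = (- 1 + \<i> * of_int \<alpha> / (of_int c * of_real t)) / of_int c" .
  hence "moeb \<alpha> \<beta> c d w = ((- 1 + \<i> * of_int \<alpha> / (of_int c * of_real t)) / of_int c) / (\<i> / (of_int c * of_real t))"
    by (simp only: moeb_def denom)
  also have "\<dots> = of_real (of_int \<alpha> / of_int c) + \<i> * of_real t"
    using c t by (simp add: field_simps)
  finally show "moeb \<alpha> \<beta> c d w = of_real (of_int \<alpha> / of_int c) + \<i> * of_real t" .
  show "Im w = 1 / (real_of_int c ^ 2 * t)"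
    by (simp add: w_def Im_divide power2_eq_square field_simps)
qed

lemma power_mult_exp_le:
  fixes c x t :: real assumes "0 < c" "0 \<le> x" "0 \<le> t"
  shows "(x + t) ^ s * exp (- (2 * c * t)) \<le> fact s / c ^ s * exp (c * x) * exp (- (c * t))"
proof -
  have "(c * (x + t)) ^ s / fact s \<le> exp (c * (x + t))"
    using assms by (intro power_div_fact_le_exp) auto
  hence "c ^ s * (x + t) ^ s \<le> exp (c * (x + t)) * fact s"
    by (simp only: pos_divide_le_eq[OF fact_gt_zero] power_mult_distrib)
  hence "(x + t) ^ s * c ^ s \<le> fact s * (exp (c * x) * exp (c * t))"
    by (simp only: distrib_left exp_add ac_simps)
  hence "(x + t) ^ s \<le> fact s / c ^ s * exp (c * x) * exp (c * t)"
    using assms by (simp add: pos_le_divide_eq ac_simps)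
  hence "(x + t) ^ s * exp (- (2 * c * t)) \<le> fact s / c ^ s * exp (c * x) * exp (c * t) * exp (- (2 * c * t))"
    by (rule mult_right_mono) simp
  also have "\<dots> = fact s / c ^ s * exp (c * x) * (exp (c * t) * exp (- (2 * c * t)))"
    by (simp only: mult.assoc)
  also have "exp (c * t) * exp (- (2 * c * t)) = exp (- (c * t))" by (simp flip: exp_add)
  finally show ?thesis .
qed

lemma integrable_on_Ici_0_if_exp_decay:
  fixes g :: "real \<Rightarrow> complex"
  assumes cont: "continuous_on {0<..} g" and "0 < c"
    and bounded: "\<And>t. 0 < t \<Longrightarrow> t \<le> T \<Longrightarrow> norm (g t) \<le> B"
    and decay: "\<And>t. T \<le> t \<Longrightarrow> norm (g t) \<le> K * exp (- (c * t))"
  shows "g integrable_on {0..}"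
proof -
  define L where "L = max (max B 0 * exp (c * T)) (max K 0)"
  have dominated: "norm (g t) \<le> L * exp (- (c * t))" if "t \<in> {0<..}" for t
  proof (cases "t \<le> T")
    case True
    have "1 \<le> exp (c * T + - (c * t))" using True \<open>0 < c\<close> by (simp add: mult_left_mono)
    hence "max B 0 * 1 \<le> max B 0 * (exp (c * T) * exp (- (c * t)))"
      unfolding exp_add by (intro mult_left_mono) auto
    hence "max B 0 \<le> max B 0 * exp (c * T) * exp (- (c * t))" by (simp add: mult.assoc)
    also have "\<dots> \<le> L * exp (- (c * t))" by (intro mult_right_mono) (auto simp: L_def)
    finally show ?thesis using bounded[of t] that True by auto
  next
    case False
    hence "norm (g t) \<le> K * exp (- (c * t))" by (intro decay) simp
    also have "\<dots> \<le> L * exp (- (c * t))" by (intro mult_right_mono) (auto simp: L_def)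
    finally show ?thesis .
  qed
  have negligible: "negligible ({0<..} - {0..} \<union> ({0..} - ({0<..}::real set)))"
    by (rule negligible_subset[of "{0}"]) auto
  have "(\<lambda>t. L * exp (- c * t)) integrable_on {0..}"
    using integrable_cmul[OF integrable_on_exp_minus_to_infinity[OF \<open>0 < c\<close>, of 0], of L] by simp
  hence "(\<lambda>t. L * exp (- (c * t))) integrable_on {0<..}"
    using integrable_spike_set_eq[OF negligible] by simp blast
  hence "g integrable_on {0<..}"
  proof (rule measurable_bounded_by_integrable_imp_integrable[rotated])
    show "g \<in> borel_measurable (lebesgue_on {0<..})"
      by (rule continuous_imp_measurable_on_sets_lebesgue[OF cont]) simp
  qed (use dominated in auto)
  thus ?thesis using integrable_spike_set_eq[OF negligible] by blast
qed

context
  fixes k N :: nat and \<epsilon> :: "int \<Rightarrow> complex" and f :: "complex \<Rightarrow> complex"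
  assumes cusp: "cusp_form k N \<epsilon> f" and dirichlet: "dirichlet_char N \<epsilon>" and N_pos: "1 \<le> N"
begin

definition slash :: "int \<Rightarrow> int \<Rightarrow> int \<Rightarrow> int \<Rightarrow> complex \<Rightarrow> complex" where
  "slash a b c d w = f (moeb a b c d w) / (of_int c * w + of_int d) ^ k"

lemma f_holomorphic: "f holomorphic_on upper_half"
  using cusp by (simp add: cusp_form_def)

lemma f_transform:
  assumes "a * d - b * c = 1" "int N dvd c" "z \<in> upper_half"
  shows "f (moeb a b c d z) = \<epsilon> d * (of_int c * z + of_int d) ^ k * f z"
proof -
  have "\<forall>a b c d. a * d - b * c = 1 \<and> int N dvd c \<longrightarrow>
          (\<forall>z\<in>upper_half. f (moeb a b c d z) = \<epsilon> d * (of_int c * z + of_int d) ^ k * f z)"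
    using cusp by (simp add: cusp_form_def)
  thus ?thesis using assms by blast
qed

lemma f_vanishes_at_cusps:
  assumes "a * d - b * c = 1"
  shows "\<forall>e>0. \<exists>Y. \<forall>z. Y < Im z \<longrightarrow> norm (f (moeb a b c d z) / (of_int c * z + of_int d) ^ k) < e"
proof -
  have "\<forall>a b c d. a * d - b * c = 1 \<longrightarrow>
          (\<forall>e>0. \<exists>Y. \<forall>z. Y < Im z \<longrightarrow> norm (f (moeb a b c d z) / (of_int c * z + of_int d) ^ k) < e)"
    using cusp by (simp add: cusp_form_def)
  thus ?thesis using assms by blast
qed

lemma slash_holomorphic:
  assumes "a * d - b * c = 1"
  shows "slash a b c d holomorphic_on upper_half"
proof -
  have "moeb a b c d holomorphic_on upper_half"
    unfolding moeb_def[abs_def] using moeb_denom_nonzero[OF assms] by (intro holomorphic_intros) auto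
  hence "(f \<circ> moeb a b c d) holomorphic_on upper_half"
    by (rule holomorphic_on_compose_gen[OF _ f_holomorphic]) (use moeb_in_upper_half[OF assms] in auto)
  thus ?thesis unfolding slash_def[abs_def] using moeb_denom_nonzero[OF assms]
    by (intro holomorphic_intros) (auto simp: o_def)
qed

lemma slash_periodic:
  assumes det: "a * d - b * c = 1" and w: "w \<in> upper_half"
  shows "slash a b c d (w + of_real (real N)) = slash a b c d w"
proof -
  define t where "t = int N"
  define z where "z = moeb a b c d w"
  have w_t: "w + of_int t \<in> upper_half" using w by (simp add: upper_half_def t_def)
  note nz = moeb_denom_nonzero[OF det w] moeb_denom_nonzero[OF det w_t]
  have "(1 - a * c * t) * (1 + a * c * t) - a\<^sup>2 * t * - (c\<^sup>2 * t) = 1"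
    by (simp add: algebra_simps power2_eq_square)
  moreover have "int N dvd - (c\<^sup>2 * t)" by (simp add: t_def)
  ultimately have "f (moeb (1 - a * c * t) (a\<^sup>2 * t) (- (c\<^sup>2 * t)) (1 + a * c * t) z) =
      \<epsilon> (1 + a * c * t) * (of_int (- (c\<^sup>2 * t)) * z + of_int (1 + a * c * t)) ^ k * f z"
    using moeb_in_upper_half[OF det w] unfolding z_def by (rule f_transform)
  moreover have "\<epsilon> (1 + a * c * t) = 1"
    using dirichlet_char_periodic[OF dirichlet, of 1 "a * c"] dirichlet
    by (simp add: t_def dirichlet_char_def algebra_simps)
  ultimately have "f (moeb a b c d (w + of_int t)) =
      ((of_int c * (w + of_int t) + of_int d) / (of_int c * w + of_int d)) ^ k * f z"
    using moeb_conj_translation[OF det nz] by (simp add: z_def)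
  thus ?thesis using nz by (simp add: slash_def z_def t_def power_divide)
qed

lemma slash_exp_decay:
  assumes det: "a * d - b * c = 1"
  shows "\<exists>C Y. \<forall>w. Y \<le> Im w \<longrightarrow> norm (slash a b c d w) \<le> C * exp (- 2 * pi * Im w / real N)"
proof (rule periodic_exp_decay)
  show "\<forall>e>0. \<exists>Y. \<forall>w. Y < Im w \<longrightarrow> norm (slash a b c d w) < e"
    using f_vanishes_at_cusps[OF det] unfolding slash_def .
qed (use slash_holomorphic[OF det] slash_periodic[OF det] N_pos in simp_all)

lemma exp_decay_at_infinity: "\<exists>C Y. \<forall>w. Y \<le> Im w \<longrightarrow> norm (f w) \<le> C * exp (- 2 * pi * Im w / real N)"
  using slash_exp_decay[of 1 1 0 0] by (simp add: slash_def moeb_def)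

text \<open>Near the cusp \<open>\<alpha>/c\<close> the factor \<open>exp (- 2 \<pi> / (N c\<^sup>2 t))\<close> from the decay of \<open>f|\<gamma>\<close> at infinity beats
  the automorphy factor \<open>(c t)\<^sup>-\<^sup>k\<close>.\<close>

lemma bounded_near_cusp:
  fixes \<alpha> c :: int
  assumes c: "c > 0" and "coprime \<alpha> c"
  shows "\<exists>t0>0. \<exists>M. \<forall>t. 0 < t \<and> t \<le> t0 \<longrightarrow> norm (f (of_real (of_int \<alpha> / of_int c) + \<i> * of_real t)) \<le> M"
proof -
  obtain d \<beta> where "d * \<alpha> + \<beta> * c = 1" using bezout_int[of \<alpha> c] assms(2) by auto
  hence det: "\<alpha> * d - (- \<beta>) * c = 1" by (simp add: algebra_simps)
  obtain C Y where CY: "\<And>w. Y \<le> Im w \<Longrightarrow> norm (slash \<alpha> (- \<beta>) c d w) \<le> C * exp (- 2 * pi * Im w / real N)"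
    using slash_exp_decay[OF det] by blast
  define t0 where "t0 = 1 / (real_of_int c ^ 2 * max Y 1)"
  define A where "A = 2 * pi / (real N * real_of_int c ^ 2)"
  have "A > 0" "t0 > 0" using c N_pos by (auto simp: A_def t0_def)
  have "norm (f (of_real (of_int \<alpha> / of_int c) + \<i> * of_real t)) \<le> \<bar>C\<bar> * fact k / (A * of_int c) ^ k"
    if t: "0 < t" "t \<le> t0" for t
  proof -
    define w where "w = - of_int d / of_int c + \<i> / (of_int c ^ 2 * of_real t)"
    have "c \<noteq> 0" "t \<noteq> 0" using c t by auto
    note w = moeb_on_vertical_line[OF det this, folded w_def]
    have "max Y 1 = 1 / (real_of_int c ^ 2 * t0)" using c by (simp add: t0_def)
    also have "\<dots> \<le> 1 / (real_of_int c ^ 2 * t)"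
      using t c by (intro divide_left_mono mult_left_mono mult_pos_pos) auto
    finally have "Y \<le> Im w" by (simp add: w)
    hence "norm (slash \<alpha> (- \<beta>) c d w) \<le> C * exp (- 2 * pi * Im w / real N)" by (rule CY)
    also have "- 2 * pi * Im w / real N = - (A / t)" using t c N_pos by (simp add: w(3) A_def field_simps)
    also have "C * exp (- (A / t)) \<le> \<bar>C\<bar> * exp (- (A / t))" by (intro mult_right_mono) auto
    also have "\<dots> \<le> \<bar>C\<bar> * (fact k * (t / A) ^ k)"
      using exp_neg_inverse_le[OF \<open>A > 0\<close> t(1)] by (intro mult_left_mono) auto
    finally have slash_le: "norm (slash \<alpha> (- \<beta>) c d w) \<le> \<bar>C\<bar> * (fact k * (t / A) ^ k)" .
    have "f (of_real (of_int \<alpha> / of_int c) + \<i> * of_real t) = slash \<alpha> (- \<beta>) c d w * (\<i> / (of_int c * of_real t)) ^ k"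
      using t c by (simp add: slash_def w)
    hence "norm (f (of_real (of_int \<alpha> / of_int c) + \<i> * of_real t)) = norm (slash \<alpha> (- \<beta>) c d w) / (of_int c * t) ^ k"
      using t c by (simp add: norm_mult norm_divide norm_power power_divide abs_mult)
    also have "\<dots> \<le> \<bar>C\<bar> * (fact k * (t / A) ^ k) / (of_int c * t) ^ k"
      using slash_le t c by (intro divide_right_mono) auto
    also have "\<dots> = \<bar>C\<bar> * fact k / (A * of_int c) ^ k"
      using t c \<open>A > 0\<close> by (simp add: power_divide power_mult_distrib field_simps)
    finally show ?thesis .
  qed
  thus ?thesis using \<open>t0 > 0\<close> by blast
qed

lemma bounded_on_vertical_segment:
  fixes x :: rat
  shows "\<exists>B. \<forall>t. 0 < t \<and> t \<le> T \<longrightarrow> norm (f (of_real (of_rat x) + \<i> * of_real t)) \<le> B"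
proof -
  obtain \<alpha> c where x: "quotient_of x = (\<alpha>, c)" by (cases "quotient_of x")
  hence "c > 0" "coprime \<alpha> c" "of_rat x = (of_int \<alpha> / of_int c :: real)"
    using quotient_of_denom_pos quotient_of_coprime quotient_of_div[OF x] by (auto simp: of_rat_divide)
  then obtain t0 M where "t0 > 0"
    and M: "\<And>t. 0 < t \<Longrightarrow> t \<le> t0 \<Longrightarrow> norm (f (of_real (of_rat x) + \<i> * of_real t)) \<le> M"
    using bounded_near_cusp by metis
  have "continuous_on {t0..T} (\<lambda>t. f (of_real (of_rat x) + \<i> * of_real t))"
    using \<open>t0 > 0\<close> by (intro continuous_on_compose2[OF holomorphic_on_imp_continuous_on[OF f_holomorphic]]
                          continuous_intros) (auto simp: upper_half_def)
  then obtain M' where "\<And>t. t \<in> {t0..T} \<Longrightarrow> norm (f (of_real (of_rat x) + \<i> * of_real t)) \<le> M'"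
    using compact_continuous_image[of "{t0..T}"] compact_imp_bounded bounded_iff by (metis compact_Icc imageI)
  hence "norm (f (of_real (of_rat x) + \<i> * of_real t)) \<le> max M M'" if "0 < t" "t \<le> T" for t
    using M[of t] that by (cases "t \<le> t0") (auto simp: le_max_iff_disj)
  thus ?thesis by blast
qed

lemma vertical_integrable:
  fixes x :: rat
  shows "(\<lambda>t. f (of_real (of_rat x) + \<i> * of_real t) * (of_real (of_rat x) + \<i> * of_real t) ^ s) integrable_on {0..}"
proof -
  define z where "z t = of_real (of_rat x) + \<i> * of_real t" for t
  have norm_z: "norm (z t) \<le> \<bar>of_rat x\<bar> + t" if "0 \<le> t" for t
    using norm_triangle_ineq[of "of_real (of_rat x)" "\<i> * of_real t"] that by (simp add: z_def norm_mult)
  obtain C Y where CY: "\<And>w. Y \<le> Im w \<Longrightarrow> norm (f w) \<le> C * exp (- 2 * pi * Im w / real N)"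
    using exp_decay_at_infinity by blast
  define T where "T = max Y 1"
  obtain B where B: "\<And>t. 0 < t \<Longrightarrow> t \<le> T \<Longrightarrow> norm (f (z t)) \<le> B"
    using bounded_on_vertical_segment[of T x] unfolding z_def by blast
  define c where "c = pi / real N"
  have "c > 0" using N_pos by (simp add: c_def)
  have "(\<lambda>t. f (z t) * z t ^ s) integrable_on {0..}"
  proof (rule integrable_on_Ici_0_if_exp_decay[OF _ \<open>c > 0\<close>])
    show "continuous_on {0<..} (\<lambda>t. f (z t) * z t ^ s)"
      unfolding z_def
      by (intro continuous_intros continuous_on_compose2[OF holomorphic_on_imp_continuous_on[OF f_holomorphic]])
         (auto simp: upper_half_def)
    show "norm (f (z t) * z t ^ s) \<le> B * (\<bar>of_rat x\<bar> + T) ^ s" if "0 < t" "t \<le> T" for t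
    proof -
      have "norm (z t) ^ s \<le> (\<bar>of_rat x\<bar> + T) ^ s"
        using norm_z[of t] that by (intro power_mono) auto
      thus ?thesis using B[OF that] by (simp add: norm_mult norm_power mult_mono')
    qed
    show "norm (f (z t) * z t ^ s) \<le>
        \<bar>C\<bar> * (fact s / c ^ s * exp (c * \<bar>of_rat x\<bar>)) * exp (- (c * t))" if "T \<le> t" for t
    proof -
      have "norm (f (z t)) \<le> C * exp (- 2 * pi * Im (z t) / real N)"
        using that by (intro CY) (simp add: T_def z_def)
      also have "\<dots> = C * exp (- (2 * c * t))" by (simp add: z_def c_def)
      also have "\<dots> \<le> \<bar>C\<bar> * exp (- (2 * c * t))" by (intro mult_right_mono) auto
      finally have "norm (f (z t)) \<le> \<bar>C\<bar> * exp (- (2 * c * t))" .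
      hence "norm (f (z t) * z t ^ s) \<le> \<bar>C\<bar> * exp (- (2 * c * t)) * (\<bar>of_rat x\<bar> + t) ^ s"
        using norm_z[of t] that by (auto simp: norm_mult norm_power T_def intro!: mult_mono' power_mono)
      also have "\<dots> \<le> \<bar>C\<bar> * (fact s / c ^ s * exp (c * \<bar>of_rat x\<bar>) * exp (- (c * t)))"
        using power_mult_exp_le[OF \<open>c > 0\<close>, of "\<bar>of_rat x\<bar>" t s] that
        by (subst mult.assoc, intro mult_left_mono) (auto simp: T_def mult.commute)
      finally show ?thesis by (simp add: mult.assoc)
    qed
  qed
  thus ?thesis by (simp add: z_def)
qed

end

section \<open>Theta coefficients as combinations of modular symbols\<close>

lemma int_to_icusp_scale: "int_to_icusp (\<lambda>z. c * g z) r = c * int_to_icusp g r"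
  by (simp add: int_to_icusp_def)

lemma int_to_icusp_sum:
  assumes "finite S" "\<And>s. s \<in> S \<Longrightarrow> (\<lambda>t. g s (of_real r + \<i> * of_real t)) integrable_on {0..}"
  shows "int_to_icusp (\<lambda>z. \<Sum>s\<in>S. g s z) r = (\<Sum>s\<in>S. int_to_icusp (g s) r)"
  using assms by (simp add: int_to_icusp_def integral_sum sum_distrib_left)

lemma binomial_linear_power:
  fixes P a z :: "'a::comm_ring_1"
  shows "(P * z + a) ^ t = (\<Sum>s\<le>t. of_nat (t choose s) * P ^ s * a ^ (t - s) * z ^ s)"
    and "(P * z - a) ^ t = (-1) ^ t * (\<Sum>s\<le>t. of_nat (t choose s) * P ^ s * a ^ (t - s) * (- z) ^ s)"
proof -
  have plus: "(P * z + a) ^ t = (\<Sum>s\<le>t. of_nat (t choose s) * P ^ s * a ^ (t - s) * z ^ s)" for z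
    unfolding binomial_ring by (intro sum.cong refl) (simp add: power_mult_distrib ac_simps)
  thus "(P * z + a) ^ t = (\<Sum>s\<le>t. of_nat (t choose s) * P ^ s * a ^ (t - s) * z ^ s)" .
  have "(P * z - a) ^ t = ((-1) * (P * (- z) + a)) ^ t" by (simp add: algebra_simps)
  thus "(P * z - a) ^ t = (-1) ^ t * (\<Sum>s\<le>t. of_nat (t choose s) * P ^ s * a ^ (t - s) * (- z) ^ s)"
    by (simp only: power_mult_distrib plus)
qed

lemma xi_coeff_even_eq:
  "xi_coeff f k (even i) r s = of_nat ((k - 2) choose s) * (of_real pi * \<i> *
     (int_to_icusp (\<lambda>z. f z * z ^ s) r + (-1) ^ (i + k) * int_to_icusp (\<lambda>z. f z * (- z) ^ s) (- r)))"
proof -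
  have "(if even i then 1 else -1) * (-1) ^ k = ((-1) ^ (i + k) :: complex)" by (simp add: power_add)
  thus ?thesis unfolding xi_coeff_def by (simp add: algebra_simps)
qed

context
  fixes k N :: nat and \<epsilon> :: "int \<Rightarrow> complex" and f :: "complex \<Rightarrow> complex"
  assumes cusp: "cusp_form k N \<epsilon> f" and dirichlet: "dirichlet_char N \<epsilon>" and N_pos: "1 \<le> N"
begin

lemma int_to_icusp_poly:
  fixes q :: rat
  shows "int_to_icusp (\<lambda>z. \<Sum>s\<le>t. c s * (f z * (\<sigma> * z) ^ s)) (of_rat q) =
           (\<Sum>s\<le>t. c s * int_to_icusp (\<lambda>z. f z * (\<sigma> * z) ^ s) (of_rat q))"
proof -
  have "(\<lambda>x. c s * (f (of_real (of_rat q) + \<i> * of_real x) * (\<sigma> * (of_real (of_rat q) + \<i> * of_real x)) ^ s))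
          integrable_on {0..}" for s
    using integrable_on_mult_right[OF vertical_integrable[OF cusp dirichlet N_pos, of q s], of "c s * \<sigma> ^ s"]
    by (simp add: power_mult_distrib ac_simps)
  thus ?thesis by (simp add: int_to_icusp_sum int_to_icusp_scale)
qed

text \<open>Both integrals in \<open>\<theta>\<close> are matched with \<open>\<xi>\<^sub>f\<close> at the single cusp \<open>- a / p\<^sup>n\<^sup>+\<^sup>1\<close>, the second one
  after writing \<open>(p\<^sup>n\<^sup>+\<^sup>1 z - a)\<^sup>t = (-1)\<^sup>t (p\<^sup>n\<^sup>+\<^sup>1 (- z) + a)\<^sup>t\<close>.\<close>

lemma theta_coeff_eq_xi_coeff_sum:
  assumes "t \<le> k - 2"
  shows "theta_coeff f k \<Omega> p n i t a =
    (\<Sum>s\<le>t. of_nat (t choose s) * of_nat (p ^ (n + 1)) ^ s * of_int a ^ (t - s) *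
        (xi_coeff f k (even i) (of_rat (- of_int a / of_nat (p ^ (n + 1)))) s / \<Omega>)
        / of_nat ((k - 2) choose s))"
proof -
  define r :: rat where "r = - of_int a / of_nat (p ^ (n + 1))"
  define c :: "nat \<Rightarrow> complex" where "c s = of_nat (t choose s) * of_nat (p ^ (n + 1)) ^ s * of_int a ^ (t - s)" for s
  define J where "J \<sigma> x s = int_to_icusp (\<lambda>z. f z * (\<sigma> * z) ^ s) (of_rat x)" for \<sigma> x s
  have r: "- of_int a / real (p ^ (n + 1)) = of_rat r" "of_int a / real (p ^ (n + 1)) = of_rat (- r)" "- (of_rat r :: real) = of_rat (- r)"
    by (simp_all add: r_def of_rat_divide of_rat_minus of_rat_mult of_rat_power)
  have "(\<lambda>z. f z * (of_nat (p ^ (n + 1)) * z + of_int a) ^ t) = (\<lambda>z. \<Sum>s\<le>t. c s * (f z * (1 * z) ^ s))"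
    unfolding binomial_linear_power by (simp add: c_def sum_distrib_left ac_simps)
  hence plus: "int_to_icusp (\<lambda>z. f z * (of_nat (p ^ (n + 1)) * z + of_int a) ^ t) (of_rat r) = (\<Sum>s\<le>t. c s * J 1 r s)"
    unfolding J_def by (simp only: int_to_icusp_poly)
  have "(\<lambda>z. f z * (of_nat (p ^ (n + 1)) * z - of_int a) ^ t) = (\<lambda>z. (-1) ^ t * (\<Sum>s\<le>t. c s * (f z * (-1 * z) ^ s)))"
    unfolding binomial_linear_power by (simp add: c_def sum_distrib_left ac_simps)
  hence minus: "int_to_icusp (\<lambda>z. f z * (of_nat (p ^ (n + 1)) * z - of_int a) ^ t) (of_rat (- r)) =
      (-1) ^ t * (\<Sum>s\<le>t. c s * J (-1) (- r) s)"
    unfolding J_def by (simp only: int_to_icusp_scale int_to_icusp_poly)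
  have xi: "xi_coeff f k (even i) (of_rat r) s / \<Omega> / of_nat ((k - 2) choose s)
        = of_real pi * \<i> * (J 1 r s + (-1) ^ (i + k) * J (-1) (- r) s) / \<Omega>" if "s \<le> t" for s
    using that assms r(3) by (simp add: xi_coeff_even_eq J_def)
  have "theta_coeff f k \<Omega> p n i t a = of_real pi * \<i> / \<Omega> *
      ((\<Sum>s\<le>t. c s * J 1 r s) + (-1) ^ (i + k + t) * ((-1) ^ t * (\<Sum>s\<le>t. c s * J (-1) (- r) s)))"
    unfolding theta_coeff_def r(1,2) plus[symmetric] minus[symmetric] by simp
  also have "\<dots> = (\<Sum>s\<le>t. c s * (of_real pi * \<i> * (J 1 r s + (-1) ^ (i + k) * J (-1) (- r) s) / \<Omega>))"
    by (simp add: sum_distrib_left sum.distrib algebra_simps power_add add_divide_distrib)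
  also have "\<dots> = (\<Sum>s\<le>t. c s * (xi_coeff f k (even i) (of_rat r) s / \<Omega> / of_nat ((k - 2) choose s)))"
    using xi by simp
  finally show ?thesis by (simp add: c_def r_def)
qed

end

lemma iota_theta_coeff:
  assumes "cusp_form k N \<epsilon> f" "dirichlet_char N \<epsilon>" "1 \<le> N" "iota_hom \<iota>" "t \<le> k - 2"
    and algebraic: "\<And>s. s \<le> t \<Longrightarrow> algebraic (xi_coeff f k (even i) (of_rat (- of_int a / of_nat (p ^ (n + 1)))) s / \<Omega>)"
  shows "\<iota> (theta_coeff f k \<Omega> p n i t a) =
    (\<Sum>s\<le>t. of_nat (t choose s) * of_nat (p ^ (n + 1)) ^ s * of_int a ^ (t - s) *
        (\<iota> (xi_coeff f k (even i) (of_rat (- of_int a / of_nat (p ^ (n + 1)))) s / \<Omega>) / of_nat ((k - 2) choose s)))"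
proof -
  interpret iota_hom \<iota> by fact
  define \<mu> where "\<mu> s = xi_coeff f k (even i) (of_rat (- of_int a / of_nat (p ^ (n + 1)))) s / \<Omega>" for s
  define Z where "Z s = int (t choose s) * int (p ^ (n + 1)) ^ s * a ^ (t - s)" for s
  have theta: "theta_coeff f k \<Omega> p n i t a = (\<Sum>s\<le>t. of_int (Z s) * \<mu> s / of_nat ((k - 2) choose s))"
    unfolding theta_coeff_eq_xi_coeff_sum[OF assms(1-3,5)] \<mu>_def Z_def by simp
  have \<mu>: "algebraic (\<mu> s)" if "s \<in> {..t}" for s using algebraic that by (simp add: \<mu>_def)
  have "\<iota> (\<Sum>s\<le>t. of_int (Z s) * \<mu> s / of_nat ((k - 2) choose s)) =
      (\<Sum>s\<le>t. \<iota> (of_int (Z s) * \<mu> s / of_nat ((k - 2) choose s)))"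
    by (intro iota_sum) (simp add: divide_inverse algebraic_mult algebraic_inverse \<mu>)
  also have "\<dots> = (\<Sum>s\<le>t. of_int (Z s) * \<iota> (\<mu> s) / of_nat ((k - 2) choose s))"
    by (intro sum.cong refl iota_of_int_mult_div \<mu>)
  finally show ?thesis unfolding theta by (simp add: Z_def \<mu>_def)
qed

section \<open>The alternating sum of twisted theta coefficients\<close>

lemma sum_alternating_choose_mult_choose:
  fixes y :: "'a::comm_ring_1"
  assumes "s \<le> j"
  shows "(\<Sum>t\<le>j. (-1) ^ (j - t) * of_nat (j choose t) * of_nat (t choose s) * y ^ (t - s))
       = of_nat (j choose s) * (y - 1) ^ (j - s)"
proof -
  define g where "g t = (-1) ^ (j - t) * of_nat (j choose t) * of_nat (t choose s) * y ^ (t - s)" for t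
  have "(\<Sum>t\<le>j. g t) = (\<Sum>t\<in>{s..j}. g t)"
    by (rule sum.mono_neutral_right) (auto simp: g_def binomial_eq_0)
  also have "\<dots> = (\<Sum>r\<le>j - s. g (r + s))"
    using sum.shift_bounds_cl_nat_ivl[of g 0 s "j - s"] assms by (simp add: atLeast0AtMost)
  also have "\<dots> = (\<Sum>r\<le>j - s. of_nat (j choose s) * (of_nat ((j - s) choose r) * y ^ r * (-1) ^ (j - s - r)))"
  proof (intro sum.cong refl)
    fix r assume "r \<in> {..j - s}"
    hence "(j choose (r + s)) * ((r + s) choose s) = (j choose s) * ((j - s) choose r)"
      using choose_mult[of s "r + s" j] assms by simp
    hence "(of_nat (j choose (r + s)) * of_nat ((r + s) choose s) :: 'a) = of_nat (j choose s) * of_nat ((j - s) choose r)"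
      by (metis of_nat_mult)
    moreover have "g (r + s) = (of_nat (j choose (r + s)) * of_nat ((r + s) choose s)) * (y ^ r * (-1) ^ (j - s - r))"
      by (simp add: g_def ac_simps diff_diff_add)
    ultimately show "g (r + s) = of_nat (j choose s) * (of_nat ((j - s) choose r) * y ^ r * (-1) ^ (j - s - r))"
      by (simp add: ac_simps)
  qed
  also have "\<dots> = of_nat (j choose s) * (y + (-1)) ^ (j - s)"
    by (simp only: sum_distrib_left binomial_ring)
  finally show ?thesis by (simp add: g_def)
qed

lemma alternating_binomial_transform:
  fixes A P w :: "'a::comm_ring_1"
  shows "(\<Sum>t\<le>j. (-1) ^ (j - t) * of_nat (j choose t) *
            (\<Sum>s\<le>t. of_nat (t choose s) * P ^ s * A ^ (t - s) * \<eta> s) * w ^ t)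
       = (\<Sum>s\<le>j. of_nat (j choose s) * \<eta> s * (P * w) ^ s * (A * w - 1) ^ (j - s))"
proof -
  define X where "X t s = (-1) ^ (j - t) * of_nat (j choose t) * of_nat (t choose s) * (A * w) ^ (t - s)" for t s
  have summand: "(-1) ^ (j - t) * of_nat (j choose t) * (of_nat (t choose s) * P ^ s * A ^ (t - s) * \<eta> s) * w ^ t
      = \<eta> s * (P * w) ^ s * X t s" for t s
  proof (cases "s \<le> t")
    case True
    hence "w ^ t = w ^ s * w ^ (t - s)" by (simp flip: power_add)
    thus ?thesis by (simp add: X_def power_mult_distrib ac_simps)
  qed (simp add: X_def binomial_eq_0)
  have "(\<Sum>t\<le>j. (-1) ^ (j - t) * of_nat (j choose t) *
            (\<Sum>s\<le>t. of_nat (t choose s) * P ^ s * A ^ (t - s) * \<eta> s) * w ^ t)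
      = (\<Sum>t\<le>j. \<Sum>s\<le>j. \<eta> s * (P * w) ^ s * X t s)"
  proof (intro sum.cong refl)
    fix t assume "t \<in> {..j}"
    have "(-1) ^ (j - t) * of_nat (j choose t) * (\<Sum>s\<le>t. of_nat (t choose s) * P ^ s * A ^ (t - s) * \<eta> s) * w ^ t
        = (\<Sum>s\<le>t. (-1) ^ (j - t) * of_nat (j choose t) * (of_nat (t choose s) * P ^ s * A ^ (t - s) * \<eta> s) * w ^ t)"
      by (simp only: sum_distrib_left sum_distrib_right)
    also have "\<dots> = (\<Sum>s\<le>t. \<eta> s * (P * w) ^ s * X t s)" by (simp only: summand)
    also have "\<dots> = (\<Sum>s\<le>j. \<eta> s * (P * w) ^ s * X t s)"
      using \<open>t \<in> {..j}\<close> by (intro sum.mono_neutral_left) (auto simp: X_def binomial_eq_0)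
    finally show "(-1) ^ (j - t) * of_nat (j choose t) * (\<Sum>s\<le>t. of_nat (t choose s) * P ^ s * A ^ (t - s) * \<eta> s) * w ^ t
        = (\<Sum>s\<le>j. \<eta> s * (P * w) ^ s * X t s)" .
  qed
  also have "\<dots> = (\<Sum>s\<le>j. \<eta> s * (P * w) ^ s * (\<Sum>t\<le>j. X t s))"
    by (subst sum.swap) (simp add: sum_distrib_left)
  also have "\<dots> = (\<Sum>s\<le>j. of_nat (j choose s) * \<eta> s * (P * w) ^ s * (A * w - 1) ^ (j - s))"
  proof (intro sum.cong refl)
    fix s assume "s \<in> {..j}"
    hence "(\<Sum>t\<le>j. X t s) = of_nat (j choose s) * (A * w - 1) ^ (j - s)"
      unfolding X_def by (intro sum_alternating_choose_mult_choose) simp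
    thus "\<eta> s * (P * w) ^ s * (\<Sum>t\<le>j. X t s) = of_nat (j choose s) * \<eta> s * (P * w) ^ s * (A * w - 1) ^ (j - s)"
      by (simp add: ac_simps)
  qed
  finally show ?thesis .
qed

lemma (in nonarch_field) absv_binomial_sum_le:
  assumes "absv x \<le> r" "absv y \<le> r" "\<And>s. s \<le> j \<Longrightarrow> absv (\<eta> s) \<le> 1"
  shows "absv (\<Sum>s\<le>j. of_nat (j choose s) * \<eta> s * x ^ s * y ^ (j - s)) \<le> r ^ j"
proof (rule absv_sum_le)
  have "0 \<le> r" using assms(1) absv_nonneg order_trans by blast
  fix s assume "s \<in> {..j}"
  have "absv (of_nat (j choose s) * \<eta> s * x ^ s * y ^ (j - s)) \<le> 1 * 1 * r ^ s * r ^ (j - s)"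
    unfolding absv_mult absv_power using assms \<open>s \<in> {..j}\<close> absv_of_nat_le_1 \<open>0 \<le> r\<close>
    by (intro mult_mono power_mono) auto
  thus "absv (of_nat (j choose s) * \<eta> s * x ^ s * y ^ (j - s)) \<le> r ^ j"
    using \<open>s \<in> {..j}\<close> by (simp flip: power_add)
qed (use assms(1) order_trans[OF absv_nonneg] in auto)

lemma root_of_unity_power_int_mod:
  fixes z :: "'a::field"
  assumes "z ^ d = 1" "0 < d"
  shows "z ^ nat ((int i - int t) mod int d) = z ^ i * inverse z ^ t"
proof -
  have power_mod: "z ^ x = z ^ (x mod d)" for x
    by (metis assms(1) mult_div_mod_eq power_add power_mult power_one mult_1_left)
  have "int ((nat ((int i - int t) mod int d) + t) mod d) = int (i mod d)"
    using assms(2) by (simp add: zmod_int mod_add_left_eq)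
  hence "z ^ nat ((int i - int t) mod int d) * z ^ t = z ^ i"
    using power_mod[of "nat ((int i - int t) mod int d) + t"] power_mod[of i] by (simp add: power_add)
  moreover have "z \<noteq> 0" using assms by (auto simp: zero_power)
  ultimately show ?thesis by (simp add: field_simps power_inverse)
qed

lemma pcompose_one_plus_X_power:
  fixes c :: "'a::comm_ring_1"
  shows "pcompose ([:1, 1:] ^ m) [:c - 1, c:] = smult (c ^ m) ([:1, 1:] ^ m)"
proof -
  have "pcompose ([:1, 1:] ^ m) [:c - 1, c:] = (pcompose [:1, 1:] [:c - 1, c:]) ^ m"
    by (induction m) (simp_all only: power_0 power_Suc pcompose_1 pcompose_mult)
  also have "pcompose [:1, 1:] [:c - 1, c:] = smult c [:1, 1:]"
    by (simp add: pcompose_pCons)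
  finally show ?thesis by (simp only: smult_power)
qed

lemma smult_sum_right: "smult c (sum f A) = (\<Sum>a\<in>A. smult c (f a))"
  by (induction A rule: infinite_finite_induct) (auto simp: smult_add_right)

context padic_abs
begin

lemma absv_choose_eq_1:
  assumes "m < p" "s \<le> m"
  shows "absv (of_nat (m choose s) :: 'K) = 1"
proof -
  have "\<not> p dvd fact m" using prime_dvd_fact_iff[OF prime_p] assms(1) by simp
  moreover have "(m choose s) dvd fact m"
    using binomial_fact_lemma[OF assms(2)] by (metis dvd_triv_right)
  ultimately have "coprime (int (m choose s)) (int p)" using prime_p
    by (metis dvd_trans coprime_commute coprime_int_iff prime_imp_coprime)
  thus ?thesis using absv_of_int_coprime[of "int (m choose s)"] by simp
qed

lemma pnorm_sum_smult_binomial_le: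
  assumes "finite U" "\<And>a. a \<in> U \<Longrightarrow> absv (c a) \<le> B" "0 \<le> B"
  shows "pnorm absv (\<Sum>a\<in>U. smult (c a) ([:1, 1:] ^ m a)) \<le> B"
  unfolding pnorm_def
proof (rule Max.boundedI)
  fix x assume "x \<in> (\<lambda>l. absv (coeff (\<Sum>a\<in>U. smult (c a) ([:1, 1:] ^ m a)) l)) ` {..degree (\<Sum>a\<in>U. smult (c a) ([:1, 1:] ^ m a))}"
  then obtain l where x: "x = absv (\<Sum>a\<in>U. c a * coeff ([:1, 1:] ^ m a) l)"
    by (auto simp: coeff_sum)
  have "absv (coeff ([:1, 1:] ^ m a) l :: 'K) \<le> 1" for a
    by (cases "l \<le> m a") (simp_all add: coeff_linear_poly_power absv_of_nat_le_1 coeff_eq_0 degree_linear_power)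
  hence "absv (c a * coeff ([:1, 1:] ^ m a) l) \<le> B" if "a \<in> U" for a
    using assms(2)[OF that] by (simp add: absv_mult mult_le_one[of _ 1, THEN order_trans] mult_mono'[of _ B _ 1, simplified])
  thus "x \<le> B" unfolding x using assms(3) by (intro absv_sum_le) auto
qed simp_all

end

context complete_padic_abs
begin

text \<open>With \<open>w = \<omega>(a)\<^sup>-\<^sup>1 u\<^sup>-\<^sup>m\<^sup>(\<^sup>a\<^sup>)\<close> the sum equals
  \<open>\<omega>(a)\<^sup>i \<Sum>\<^sub>s (j choose s) \<eta>\<^sub>s (p\<^sup>n\<^sup>+\<^sup>1 w)\<^sup>s (a w - 1)\<^sup>j\<^sup>-\<^sup>s\<close>, and \<open>a w - 1 = \<langle>a\<rangle> u\<^sup>-\<^sup>m\<^sup>(\<^sup>a\<^sup>) - 1\<close> is divisible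
  by \<open>p\<^sup>n\<^sup>+\<^sup>1\<close> by the choice of \<open>m(a)\<close>.\<close>

lemma absv_alternating_theta_sum_le:
  assumes odd_p: "odd p" and u_close_1: "absv (u - 1) = 1 / real p" and u_Zp: "in_Zp absv u"
    and a: "coprime a (int p)" "0 \<le> a"
    and \<eta>: "\<And>s. s \<le> j \<Longrightarrow> absv (\<eta> s) \<le> 1"
  shows "absv (\<Sum>t\<le>j. (-1) ^ (j - t) * of_nat (j choose t) *
            ((\<Sum>s\<le>t. of_nat (t choose s) * of_nat (p ^ (n + 1)) ^ s * of_int a ^ (t - s) * \<eta> s) *
             teich absv p a ^ nat ((int i - int t) mod (int p - 1)) * inverse (u ^ t) ^ mexp absv p u n a))
         \<le> 1 / real p ^ ((n + 1) * j)"
proof -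
  define z where "z = teich absv p a"
  define m where "m = mexp absv p u n a"
  define w where "w = inverse z * inverse (u ^ m)"
  have absv_z: "absv z = 1" using absv_teich[OF a] by (simp add: z_def)
  have absv_u_m: "absv (u ^ m) = 1" using absv_u[OF odd_p u_close_1] by (simp add: absv_power)
  have "z ^ nat ((int i - int t) mod (int p - 1)) = z ^ i * inverse z ^ t" for t
    using root_of_unity_power_int_mod[OF teich_power_p_sub_1[OF a], of i t] p_gt_1
    by (simp add: z_def of_nat_diff)
  hence "(\<Sum>t\<le>j. (-1) ^ (j - t) * of_nat (j choose t) *
            ((\<Sum>s\<le>t. of_nat (t choose s) * of_nat (p ^ (n + 1)) ^ s * of_int a ^ (t - s) * \<eta> s) *
             z ^ nat ((int i - int t) mod (int p - 1)) * inverse (u ^ t) ^ m))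
      = z ^ i * (\<Sum>t\<le>j. (-1) ^ (j - t) * of_nat (j choose t) *
            (\<Sum>s\<le>t. of_nat (t choose s) * of_nat (p ^ (n + 1)) ^ s * of_int a ^ (t - s) * \<eta> s) * w ^ t)"
    (is "?L = _")
    by (simp add: sum_distrib_left w_def power_mult_distrib power_inverse ac_simps flip: power_mult)
  also have "\<dots> = z ^ i * (\<Sum>s\<le>j. of_nat (j choose s) * \<eta> s *
                     (of_nat (p ^ (n + 1)) * w) ^ s * (of_int a * w - 1) ^ (j - s))"
    (is "_ = _ * ?R")
    by (simp only: alternating_binomial_transform)
  finally have eq: "?L = z ^ i * ?R" .
  have "of_int a * w - 1 = (of_int a * inverse z - u ^ m) * inverse (u ^ m)"
  proof -
    have "u ^ m \<noteq> 0" "z \<noteq> 0" using absv_u_m absv_z by (metis absv_0 zero_neq_one)+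
    thus ?thesis by (simp add: w_def field_simps)
  qed
  moreover have "absv (of_int a * inverse z - u ^ m) \<le> 1 / real p ^ Suc n"
    using u_power_mexp_close[OF odd_p u_close_1 u_Zp a, of n, folded m_def z_def]
    by (simp only: absv_minus_commute)
  ultimately have "absv (of_int a * w - 1) \<le> 1 / real p ^ Suc n"
    by (simp add: absv_mult absv_inverse absv_u_m)
  moreover have "absv (of_nat (p ^ (n + 1)) * w) \<le> 1 / real p ^ Suc n"
    using absv_p_power[of "n + 1"] by (simp add: w_def absv_mult absv_inverse absv_z absv_u_m)
  ultimately have "absv (\<Sum>s\<le>j. of_nat (j choose s) * \<eta> s *
                     (of_nat (p ^ (n + 1)) * w) ^ s * (of_int a * w - 1) ^ (j - s)) \<le> (1 / real p ^ Suc n) ^ j"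
    using \<eta> by (intro absv_binomial_sum_le)
  also have "(1 / real p ^ Suc n) ^ j = 1 / real p ^ ((n + 1) * j)"
    by (simp only: power_one_over power_mult Suc_eq_plus1)
  finally show ?thesis
    unfolding z_def[symmetric] m_def[symmetric] eq by (simp add: absv_mult absv_power absv_z)
qed

end

lemma finite_units_mod: "finite (units_mod p n)"
  unfolding units_mod_def by (rule finite_subset[of _ "{1..int (p ^ (n + 1))}"]) auto

lemma sum_pcompose_Qpoly_eq:
  "(\<Sum>t\<le>j. smult ((-1) ^ (j - t) * of_nat (j choose t))
      (pcompose (Qpoly absv \<iota> f k Omp Omm p u n i t) [:inverse (u ^ t) - 1, inverse (u ^ t):])) =
   (\<Sum>a\<in>units_mod p n. smult
      (\<Sum>t\<le>j. (-1) ^ (j - t) * of_nat (j choose t) *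
         (\<iota> (theta_coeff f k (if even i then Omp else Omm) p n i t a) *
          teich absv p a ^ nat ((int i - int t) mod (int p - 1)) * inverse (u ^ t) ^ mexp absv p u n a))
      ([:1, 1:] ^ mexp absv p u n a))"
proof -
  have "pcompose (Qpoly absv \<iota> f k Omp Omm p u n i t) [:inverse (u ^ t) - 1, inverse (u ^ t):] =
     (\<Sum>a\<in>units_mod p n. smult (\<iota> (theta_coeff f k (if even i then Omp else Omm) p n i t a) *
          teich absv p a ^ nat ((int i - int t) mod (int p - 1)) * inverse (u ^ t) ^ mexp absv p u n a)
        ([:1, 1:] ^ mexp absv p u n a))" for t
    unfolding Qpoly_def pcompose_sum pcompose_smult pcompose_one_plus_X_power
    by (simp add: smult_smult power_inverse mult.commute flip: power_mult)
  thus ?thesis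
    by (simp add: smult_sum_right smult_sum smult_smult sum.swap[where A = "{..j}"])
qed

theorem lemma3p4:
  fixes absv :: "'K::field_char_0 \<Rightarrow> real"
    and \<iota> :: "complex \<Rightarrow> 'K"
    and E :: "'K set"
    and p k N n i j :: nat
    and \<epsilon> :: "int \<Rightarrow> complex"
    and f :: "complex \<Rightarrow> complex"
    and an :: "nat \<Rightarrow> complex"
    and Omp Omm :: complex
    and u :: 'K
  assumes "prime p" and "odd p"
    and "Cp_setup absv p \<iota>"
    and "2 \<le> k" and "1 \<le> N" and "\<not> p dvd N"
    and "dirichlet_char N \<epsilon>"
    and "normalized_eigenform k N \<epsilon> f an"
    and "absv (\<iota> (an p)) < 1"
    and "finite_ext_Qp absv E"
    and "\<forall>m. algebraic (an m) \<and> \<iota> (an m) \<in> E"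
    and "\<forall>m. algebraic (\<epsilon> m) \<and> \<iota> (\<epsilon> m) \<in> E"
    and "cohom_period absv \<iota> E f k True Omp"
    and "cohom_period absv \<iota> E f k False Omm"
    and "in_Zp absv u" and "absv (u - 1) = 1 / real p"
    and "p > k - 1"
    and "i \<le> p - 2" and "j \<le> k - 2"
  shows "pnorm absv
           (\<Sum>t\<le>j. smult ((-1) ^ (j - t) * of_nat (j choose t))
              (pcompose (Qpoly absv \<iota> f k Omp Omm p u n i t) [:inverse (u ^ t) - 1, inverse (u ^ t):]))
         \<le> 1 / real p ^ ((n + 1) * j)"
proof -
  interpret complete_padic_abs absv p by (rule Cp_setup_imp_complete_padic_abs[OF assms(3,1)])
  define \<Omega> where "\<Omega> = (if even i then Omp else Omm)"
  have period: "cohom_period absv \<iota> E f k (even i) \<Omega>" using assms(13,14) by (simp add: \<Omega>_def)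
  define \<eta> where "\<eta> a s = \<iota> (xi_coeff f k (even i) (of_rat (- of_int a / of_nat (p ^ (n + 1)))) s / \<Omega>) /
                          of_nat ((k - 2) choose s)" for a :: int and s
  have "absv (\<eta> a s) \<le> 1" if "s \<le> j" for a s
    using period that assms(17,19) absv_choose_eq_1[of "k - 2" s]
    unfolding \<eta>_def cohom_period_def by (simp add: absv_mult absv_inverse divide_inverse)
  moreover have "\<iota> (theta_coeff f k \<Omega> p n i t a) =
      (\<Sum>s\<le>t. of_nat (t choose s) * of_nat (p ^ (n + 1)) ^ s * of_int a ^ (t - s) * \<eta> a s)" if "t \<le> j" for t a
    using iota_theta_coeff[OF _ assms(7,5) Cp_setup_imp_iota_hom[OF assms(3)]] assms(8) period that assms(19)
    unfolding \<eta>_def cohom_period_def normalized_eigenform_def by simp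
  ultimately have "absv (\<Sum>t\<le>j. (-1) ^ (j - t) * of_nat (j choose t) *
      (\<iota> (theta_coeff f k \<Omega> p n i t a) * teich absv p a ^ nat ((int i - int t) mod (int p - 1)) *
       inverse (u ^ t) ^ mexp absv p u n a)) \<le> 1 / real p ^ ((n + 1) * j)" if "a \<in> units_mod p n" for a
    using that absv_alternating_theta_sum_le[OF assms(2,16,15), of a] by (simp add: units_mod_def)
  thus ?thesis
    unfolding sum_pcompose_Qpoly_eq \<Omega>_def[symmetric] by (intro pnorm_sum_smult_binomial_le finite_units_mod) auto
qed

end
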